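(* Let $\mu$ be a classification problem and $f:\mathcal X\times\mathcal A\to\Delta_k$ a fixed deterministic calibrated predictor such that each $r_a:=f\sharp(\mu^X_a\times\{a\})$ has finite support $\mathcal R_a$. For each $a\in[m]$ let $s_{a,1},\dots,s_{a,n}$ be i.i.d. samples from $r_a$ (independent across $a$), and $\hat r_a=\frac1n\sum_{i=1}^n\delta_{s_{a,i}}$. Let $(\hat q,\hat\gamma_1,\dots,\hat\gamma_m)$ with $\hat q\in\mathcal Q_k$ and $\hat\gamma_a\in\Gamma(\hat r_a,\hat q)$ minimize $\sum_{a\in[m]}\sum_{s,y}\|s-y\|_1\hat\gamma_a(\{(s,y)\})$ over all such tuples. Define the randomized classifier $\hat h$ by: if $s=f(x,a)\in\mathrm{supp}(\hat r_a)$, $\hat h(x,a)=e_i$ with probability $\hat\gamma_a(\{(s,e_i)\})/\hat r_a(\{s\})$; otherwise $\hat h(x,a)$ is an arbitrary fixed label. Let $\mathrm{Err}^*_f:=\frac12\min_{q\in\mathcal Q_k}\sum_a W_1(r_a,q)$. Then for every $\delta\in(0,1)$, with probability at least $1-\delta$ over the samples, $$\sum_{a\in[m]}\mathrm{Err}_a(\hat h)-\mathrm{Err}^*_f\le\sum_{a\in[m]}\sqrt{\frac{2|\mathcal R_a|^2}{n}\ln\frac{2m|\mathcal R_a|}{\delta}}\quad\text{and}\quad\mathrm{DPGap}(\hat h)\le\max_{a\in[m]}\sqrt{\frac{|\mathcal R_a|^2}{2n}\ln\frac{2m|\mathcal R_a|}{\delta}}.$$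
   Context: Setup. $\mathcal X$ is a standard Borel space, $k\ge 2$, $\mathcal Y=\{e_1,\dots,e_k\}\subset\mathbb R^k$ the standard basis vectors, $\mathcal A=[m]$. A classification problem is a probability distribution $\mu$ of $(X,Y,A)$ on $\mathcal X\times\mathcal Y\times\mathcal A$ with $\mathbb P(A=a)>0$ for all $a$; $\mu^X_a$ is the law of $X$ given $A=a$. $\Delta_k=\{x\in\mathbb R^k:x\ge0,\sum_ix_i=1\}$. For a deterministic predictor $f$, $f\sharp(\mu^X_a\times\{a\})$ is the law of $f(X,a)$, $X\sim\mu^X_a$. $f$ is calibrated if for every $a$ and $i$, $\mathbb P_\mu(Y=e_i\mid f(X,A)=s,A=a)=s_i$ for $r_a$-a.e. $s$. A randomized classifier's output randomness is independent of $(X,Y,A)$ and of the samples; $\mathrm{Err}_a(h)=\mathbb P(h(X,a)\ne Y\mid A=a)$ evaluated on the population $\mu$. $\mathrm{DPGap}(h)=\frac12\max_{a,a'}\sum_{y\in\mathcal Y}|\mathbb P(h(X,a)=y\mid A=a)-\mathbb P(h(X,a')=y\mid A=a')|$. $\mathcal Q_k$ is the set of distributions supported on $\mathcal Y$, $\Gamma(p,q)$ the couplings of $p,q$, $W_1(p,q)=\inf_{\gamma\in\Gamma(p,q)}\int\|s-s'\|_1d\gamma$, $\delta_s$ the Dirac mass at $s$. *)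

theory Defs
  imports "HOL-Probability.Probability"
begin

(* Conventions:
   - X is a standard Borel space: a Polish type 'x with its Borel sigma-algebra.
   - Labels: Y = {e_i | i :: 'k}, 'k a finite type with CARD('k) = k; label i stands for e_i.
   - Groups: A = [m] is represented by {..<m} (0-based).
   - A classification problem is a probability measure on 'x * 'k * nat
     whose A-component lies in {..<m}. *)

definition prob_simplex :: "(real^'k::finite) set" where
  "prob_simplex = {s. (\<forall>i. 0 \<le> s $ i) \<and> (\<Sum>i\<in>UNIV. s $ i) = 1}"

definition lab_vec :: "'k::finite \<Rightarrow> real^'k" where
  "lab_vec y = (\<chi> j. if j = y then 1 else 0)"

definition l1norm :: "real^'k::finite \<Rightarrow> real" where
  "l1norm v = (\<Sum>j\<in>UNIV. \<bar>v $ j\<bar>)"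

definition lab_cost :: "real^'k::finite \<Rightarrow> 'k \<Rightarrow> real" where
  "lab_cost s y = l1norm (s - lab_vec y)"

definition Aev :: "('x \<times> 'k \<times> nat) measure \<Rightarrow> nat \<Rightarrow> ('x \<times> 'k \<times> nat) set" where
  "Aev \<mu> a = {z \<in> space \<mu>. snd (snd z) = a}"

definition classif_problem :: "('x::polish_space \<times> 'k::finite \<times> nat) measure \<Rightarrow> nat \<Rightarrow> bool" where
  "classif_problem \<mu> m \<longleftrightarrow> prob_space \<mu>
     \<and> sets \<mu> = sets (borel \<Otimes>\<^sub>M (count_space UNIV \<Otimes>\<^sub>M count_space {..<m}))
     \<and> (\<forall>a<m. measure \<mu> (Aev \<mu> a) > 0)"

definition condA :: "('x \<times> 'k \<times> nat) measure \<Rightarrow> nat \<Rightarrow> ('x \<times> 'k \<times> nat) measure" where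
  "condA \<mu> a = uniform_measure \<mu> (Aev \<mu> a)"

definition pushf :: "('x::topological_space \<times> 'k::finite \<times> nat) measure \<Rightarrow> ('x \<Rightarrow> nat \<Rightarrow> real^'k) \<Rightarrow> nat \<Rightarrow> (real^'k) measure" where
  "pushf \<mu> f a = distr (condA \<mu> a) borel (\<lambda>z. f (fst z) a)"

definition msupport :: "('b::topological_space) measure \<Rightarrow> 'b set" where
  "msupport r = {s. \<forall>U. open U \<and> s \<in> U \<longrightarrow> emeasure r U > 0}"

(* calibration: P(Y = e_i | f(X,A), A = a) = f(X,A)_i, i.e. the defining property of the
   conditional probability w.r.t. sigma(f(X,A), A) *)
definition calibrated :: "('x::topological_space \<times> 'k::finite \<times> nat) measure \<Rightarrow> ('x \<Rightarrow> nat \<Rightarrow> real^'k) \<Rightarrow> nat \<Rightarrow> bool" where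
  "calibrated \<mu> f m \<longleftrightarrow> (\<forall>a<m. \<forall>i. \<forall>B\<in>sets borel.
     measure \<mu> {z \<in> Aev \<mu> a. fst (snd z) = i \<and> f (fst z) a \<in> B}
     = (\<integral>z. indicator {z \<in> Aev \<mu> a. f (fst z) a \<in> B} z * (f (fst z) a $ i) \<partial>\<mu>))"

definition couplings :: "(real^'k::finite) measure \<Rightarrow> 'k pmf \<Rightarrow> ((real^'k) \<times> 'k) measure set" where
  "couplings p q = {\<gamma>. sets \<gamma> = sets (borel \<Otimes>\<^sub>M count_space UNIV)
      \<and> distr \<gamma> borel fst = p \<and> distr \<gamma> (count_space UNIV) snd = measure_pmf q}"

definition W1 :: "(real^'k::finite) measure \<Rightarrow> 'k pmf \<Rightarrow> ennreal" where
  "W1 p q = (INF \<gamma>\<in>couplings p q. \<integral>\<^sup>+ z. ennreal (lab_cost (fst z) (snd z)) \<partial>\<gamma>)"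

definition errstar :: "('x::topological_space \<times> 'k::finite \<times> nat) measure \<Rightarrow> ('x \<Rightarrow> nat \<Rightarrow> real^'k) \<Rightarrow> nat \<Rightarrow> real" where
  "errstar \<mu> f m = 1/2 * (INF q\<in>(UNIV :: 'k pmf set). \<Sum>a<m. enn2real (W1 (pushf \<mu> f a) q))"

definition sample_space :: "('x::topological_space \<times> 'k::finite \<times> nat) measure \<Rightarrow> ('x \<Rightarrow> nat \<Rightarrow> real^'k) \<Rightarrow> nat \<Rightarrow> nat \<Rightarrow> (nat \<Rightarrow> nat \<Rightarrow> real^'k) measure" where
  "sample_space \<mu> f m n = (\<Pi>\<^sub>M a\<in>{..<m}. \<Pi>\<^sub>M i\<in>{..<n}. pushf \<mu> f a)"

definition rhat :: "nat \<Rightarrow> (nat \<Rightarrow> nat \<Rightarrow> real^'k) \<Rightarrow> nat \<Rightarrow> (real^'k) pmf" where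
  "rhat n \<omega> a = map_pmf (\<omega> a) (pmf_of_set {..<n})"

definition feasible :: "(nat \<Rightarrow> (real^'k::finite) pmf) \<Rightarrow> nat \<Rightarrow> 'k pmf \<Rightarrow> (nat \<Rightarrow> ((real^'k) \<times> 'k) pmf) \<Rightarrow> bool" where
  "feasible rh m q \<gamma> \<longleftrightarrow> (\<forall>a<m. map_pmf fst (\<gamma> a) = rh a \<and> map_pmf snd (\<gamma> a) = q)"

definition transport_obj :: "nat \<Rightarrow> (nat \<Rightarrow> ((real^'k::finite) \<times> 'k) pmf) \<Rightarrow> real" where
  "transport_obj m \<gamma> = (\<Sum>a<m. \<Sum>z\<in>set_pmf (\<gamma> a). lab_cost (fst z) (snd z) * pmf (\<gamma> a) z)"

definition is_opt :: "(nat \<Rightarrow> (real^'k::finite) pmf) \<Rightarrow> nat \<Rightarrow> 'k pmf \<Rightarrow> (nat \<Rightarrow> ((real^'k) \<times> 'k) pmf) \<Rightarrow> bool" where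
  "is_opt rh m q \<gamma> \<longleftrightarrow> feasible rh m q \<gamma>
     \<and> (\<forall>q' \<gamma>'. feasible rh m q' \<gamma>' \<longrightarrow> transport_obj m \<gamma> \<le> transport_obj m \<gamma>')"

(* randomized classifier: hhat x a y = probability that hhat(x,a) = e_y *)
definition hhat :: "('x \<Rightarrow> nat \<Rightarrow> real^'k::finite) \<Rightarrow> (nat \<Rightarrow> (real^'k) pmf) \<Rightarrow> (nat \<Rightarrow> ((real^'k) \<times> 'k) pmf) \<Rightarrow> 'k \<Rightarrow> 'x \<Rightarrow> nat \<Rightarrow> 'k \<Rightarrow> real" where
  "hhat f rh \<gamma> y0 x a y = (if f x a \<in> set_pmf (rh a)
      then pmf (\<gamma> a) (f x a, y) / pmf (rh a) (f x a)
      else (if y = y0 then 1 else 0))"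

(* Err_a(h) = P(h(X,a) /= Y | A = a), output randomness independent of (X,Y,A) *)
definition randErr :: "('x \<times> 'k::finite \<times> nat) measure \<Rightarrow> ('x \<Rightarrow> nat \<Rightarrow> 'k \<Rightarrow> real) \<Rightarrow> nat \<Rightarrow> real" where
  "randErr \<mu> h a = (\<integral>z. (\<Sum>y\<in>UNIV - {fst (snd z)}. h (fst z) a y) \<partial>(condA \<mu> a))"

definition predProb :: "('x \<times> 'k::finite \<times> nat) measure \<Rightarrow> ('x \<Rightarrow> nat \<Rightarrow> 'k \<Rightarrow> real) \<Rightarrow> nat \<Rightarrow> 'k \<Rightarrow> real" where
  "predProb \<mu> h a y = (\<integral>z. h (fst z) a y \<partial>(condA \<mu> a))"

definition DPGap :: "('x \<times> 'k::finite \<times> nat) measure \<Rightarrow> ('x \<Rightarrow> nat \<Rightarrow> 'k \<Rightarrow> real) \<Rightarrow> nat \<Rightarrow> real" where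
  "DPGap \<mu> h m = 1/2 * Max {(\<Sum>y\<in>UNIV. \<bar>predProb \<mu> h a y - predProb \<mu> h a' y\<bar>) | a a'. a < m \<and> a' < m}"

end

theory Submission
  imports Defs
begin

(*
  On the finite supports R_a everything is a finite transport problem. Calibration makes the
  conditional error of predicting y at score s equal to 1 - s_y = ||s - e_y||_1 / 2, so the
  classifier read off a coupling of the score law with q errs with probability half the cost of
  the coupling and predicts with law q. Replacing r_a by the empirical r^_a moves both quantities
  by at most ||r^_a - r_a||_1, and any coupling of r_a and q can be moved to a coupling of r^_a and q
  at extra cost ||r^_a - r_a||_1. Hence the empirical optimum costs at most
  sum_a W_1(r_a, q) + sum_a ||r^_a - r_a||_1 for every q, which gives excess error
  <= 3/2 sum_a ||r^_a - r_a||_1 and DP gap <= max_a ||r^_a - r_a||_1. Hoeffding's inequality for the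
  empirical frequency of each support point and a union bound over groups and support points make
  every ||r^_a - r_a||_1 small with probability at least 1 - delta.
*)

section \<open>Label costs and couplings of finite distributions\<close>

lemma simplex_nth_le_1: "s \<in> prob_simplex \<Longrightarrow> s $ y \<le> 1"
  unfolding prob_simplex_def
  by (metis (mono_tags, lifting) mem_Collect_eq member_le_sum finite UNIV_I)

lemma lab_cost_simplex:
  assumes s: "s \<in> prob_simplex"
  shows "lab_cost s y = 2 * (1 - s $ y)"
proof -
  have nonneg: "\<And>i. 0 \<le> s $ i" and one: "(\<Sum>i\<in>UNIV. s $ i) = 1"
    using s by (auto simp: prob_simplex_def)
  have "lab_cost s y = \<bar>s $ y - 1\<bar> + (\<Sum>j\<in>UNIV - {y}. \<bar>s $ j - (if j = y then 1 else 0)\<bar>)"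
    by (simp add: lab_cost_def l1norm_def lab_vec_def sum.remove[of _ y])
  also have "(\<Sum>j\<in>UNIV - {y}. \<bar>s $ j - (if j = y then 1 else 0)\<bar>) = (\<Sum>j\<in>UNIV - {y}. s $ j)"
    using nonneg by (intro sum.cong) auto
  also have "\<dots> = 1 - s $ y"
    using one by (simp add: sum_diff1)
  finally show ?thesis
    using simplex_nth_le_1[OF s, of y] by simp
qed

lemma lab_cost_nonneg: "s \<in> prob_simplex \<Longrightarrow> 0 \<le> lab_cost s y"
  by (simp add: lab_cost_simplex simplex_nth_le_1)

lemma lab_cost_le_2: "s \<in> prob_simplex \<Longrightarrow> lab_cost s y \<le> 2"
  by (simp add: lab_cost_simplex prob_simplex_def)

lemma pmf_map_fst_eq_sum:
  fixes \<gamma> :: "('a \<times> 'b::finite) pmf"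
  shows "pmf (map_pmf fst \<gamma>) s = (\<Sum>y\<in>UNIV. pmf \<gamma> (s, y))"
proof -
  have "fst -` {s} = {s} \<times> (UNIV :: 'b set)"
    by auto
  then have "pmf (map_pmf fst \<gamma>) s = sum (pmf \<gamma>) ({s} \<times> UNIV)"
    by (simp add: pmf_map measure_measure_pmf_finite)
  also have "\<dots> = (\<Sum>y\<in>UNIV. pmf \<gamma> (s, y))"
    by (rule sum.reindex_cong[where l="\<lambda>y. (s, y)"]) (auto simp: inj_on_def)
  finally show ?thesis .
qed

lemma pmf_map_snd_eq_sum:
  assumes "finite R" "set_pmf \<gamma> \<subseteq> R \<times> UNIV"
  shows "pmf (map_pmf snd \<gamma>) y = (\<Sum>s\<in>R. pmf \<gamma> (s, y))"
proof -
  have "pmf (map_pmf snd \<gamma>) y = measure \<gamma> (snd -` {y} \<inter> set_pmf \<gamma>)"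
    by (simp add: pmf_map measure_Int_set_pmf)
  also have "snd -` {y} \<inter> set_pmf \<gamma> = (R \<times> {y}) \<inter> set_pmf \<gamma>"
    using assms(2) by auto
  also have "measure \<gamma> \<dots> = sum (pmf \<gamma>) (R \<times> {y})"
    using assms(1) by (simp add: measure_Int_set_pmf measure_measure_pmf_finite)
  also have "\<dots> = (\<Sum>s\<in>R. pmf \<gamma> (s, y))"
    by (rule sum.reindex_cong[where l="\<lambda>s. (s, y)"]) (auto simp: inj_on_def)
  finally show ?thesis .
qed

lemma set_pmf_subset_Times_if_map_fst:
  assumes "map_pmf fst \<gamma> = p" "set_pmf p \<subseteq> R"
  shows "set_pmf \<gamma> \<subseteq> R \<times> UNIV"
  using assms by force

definition coupling_cost :: "((real^'k::finite) \<times> 'k) pmf \<Rightarrow> real" where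
  "coupling_cost \<gamma> = (\<Sum>z\<in>set_pmf \<gamma>. lab_cost (fst z) (snd z) * pmf \<gamma> z)"

lemma transport_obj_eq_sum_coupling_cost: "transport_obj m \<gamma> = (\<Sum>a<m. coupling_cost (\<gamma> a))"
  by (simp add: transport_obj_def coupling_cost_def)

lemma coupling_cost_eq_sum:
  assumes "finite R" "set_pmf \<gamma> \<subseteq> R \<times> UNIV"
  shows "coupling_cost \<gamma> = (\<Sum>s\<in>R. \<Sum>y\<in>UNIV. lab_cost s y * pmf \<gamma> (s, y))"
proof -
  have "coupling_cost \<gamma> = (\<Sum>z\<in>R \<times> UNIV. lab_cost (fst z) (snd z) * pmf \<gamma> z)"
    unfolding coupling_cost_def using assms
    by (intro sum.mono_neutral_left) (auto simp: set_pmf_eq')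
  then show ?thesis
    by (simp add: sum.cartesian_product case_prod_beta)
qed

definition coupling_rule :: "'a pmf \<Rightarrow> ('a \<times> 'k) pmf \<Rightarrow> 'k \<Rightarrow> 'a \<Rightarrow> 'k \<Rightarrow> real" where
  "coupling_rule p \<gamma> y0 s y =
     (if s \<in> set_pmf p then pmf \<gamma> (s, y) / pmf p s else if y = y0 then 1 else 0)"

lemma hhat_eq_coupling_rule: "hhat f p \<gamma> y0 x a y = coupling_rule (p a) (\<gamma> a) y0 (f x a) y"
  by (simp add: hhat_def coupling_rule_def)

lemma coupling_rule_nonneg: "0 \<le> coupling_rule p \<gamma> y0 s y"
  by (simp add: coupling_rule_def)

lemma sum_coupling_rule:
  fixes \<gamma> :: "('a \<times> 'k::finite) pmf"
  assumes "map_pmf fst \<gamma> = p"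
  shows "(\<Sum>y\<in>UNIV. coupling_rule p \<gamma> y0 s y) = 1"
proof (cases "s \<in> set_pmf p")
  case True
  then have "pmf p s > 0"
    by (simp add: pmf_positive)
  with True show ?thesis
    using pmf_map_fst_eq_sum[of \<gamma> s] assms by (simp add: coupling_rule_def flip: sum_divide_distrib)
qed (simp add: coupling_rule_def)

lemma pmf_mult_coupling_rule:
  assumes "map_pmf fst \<gamma> = p"
  shows "pmf p s * coupling_rule p \<gamma> y0 s y = pmf \<gamma> (s, y)"
proof (cases "s \<in> set_pmf p")
  case False
  then have "(s, y) \<notin> set_pmf \<gamma>"
    using assms by force
  with False show ?thesis
    by (simp add: set_pmf_iff)
qed (simp add: coupling_rule_def set_pmf_iff)

lemma borel_measurable_coupling_rule:
  fixes p :: "'a::t1_space pmf"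
  assumes "finite (set_pmf p)"
  shows "(\<lambda>s. coupling_rule p \<gamma> y0 s y) \<in> borel_measurable borel"
proof -
  have indicator_mult: "indicator {t} s * c = (if t = s then c else 0)" for s t and c :: real
    by (simp add: indicator_def)
  have "coupling_rule p \<gamma> y0 s y = (\<Sum>t\<in>set_pmf p. indicator {t} s * (pmf \<gamma> (t, y) / pmf p t))
      + indicator (- set_pmf p) s * (if y = y0 then 1 else 0)" for s
    unfolding coupling_rule_def indicator_mult using assms by simp
  moreover have "- set_pmf p \<in> sets borel"
    using assms by (intro borel_open) (simp add: finite_imp_closed open_Compl)
  ultimately show ?thesis
    by (simp only:) (intro borel_measurable_add borel_measurable_sum borel_measurable_times
        borel_measurable_indicator borel_measurable_const; simp)
qed

text \<open>By calibration, \<open>1 - s $ y\<close> is the conditional error of predicting \<open>y\<close> at score \<open>s\<close>;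
  on the simplex it is half the label cost.\<close>

lemma coupling_rule_error_le:
  assumes R: "finite R" "R \<subseteq> prob_simplex" and p: "set_pmf p \<subseteq> R" and \<gamma>: "map_pmf fst \<gamma> = p"
  shows "(\<Sum>s\<in>R. r s * (\<Sum>y\<in>UNIV. coupling_rule p \<gamma> y0 s y * (1 - s $ y)))
          \<le> coupling_cost \<gamma> / 2 + (\<Sum>s\<in>R. \<bar>pmf p s - r s\<bar>)"
proof -
  define H where "H s = (\<Sum>y\<in>UNIV. coupling_rule p \<gamma> y0 s y * (1 - s $ y))" for s
  have H_bounds: "0 \<le> H s \<and> H s \<le> 1" if "s \<in> R" for s
  proof -
    have s: "s \<in> prob_simplex"
      using that R(2) by blast
    have "0 \<le> H s"
      unfolding H_def using simplex_nth_le_1[OF s]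
      by (intro sum_nonneg mult_nonneg_nonneg coupling_rule_nonneg) simp
    moreover have "H s \<le> (\<Sum>y\<in>UNIV. coupling_rule p \<gamma> y0 s y)"
      unfolding H_def using s
      by (intro sum_mono mult_left_le coupling_rule_nonneg) (simp add: prob_simplex_def)
    ultimately show ?thesis
      using sum_coupling_rule[OF \<gamma>] by simp
  qed
  have "coupling_cost \<gamma> = (\<Sum>s\<in>R. \<Sum>y\<in>UNIV. lab_cost s y * pmf \<gamma> (s, y))"
    using coupling_cost_eq_sum[OF R(1) set_pmf_subset_Times_if_map_fst[OF \<gamma> p]] .
  also have "\<dots> = (\<Sum>s\<in>R. \<Sum>y\<in>UNIV. 2 * (pmf p s * (coupling_rule p \<gamma> y0 s y * (1 - s $ y))))"
  proof (intro sum.cong refl)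
    fix s y assume "s \<in> R"
    then have "lab_cost s y = 2 * (1 - s $ y)"
      using R(2) lab_cost_simplex by blast
    then show "lab_cost s y * pmf \<gamma> (s, y) = 2 * (pmf p s * (coupling_rule p \<gamma> y0 s y * (1 - s $ y)))"
      by (simp only:) (simp add: algebra_simps flip: pmf_mult_coupling_rule[OF \<gamma>, of s y0 y])
  qed
  finally have cost: "coupling_cost \<gamma> = 2 * (\<Sum>s\<in>R. pmf p s * H s)"
    by (simp add: H_def sum_distrib_left)
  have "(\<Sum>s\<in>R. r s * H s) = (\<Sum>s\<in>R. pmf p s * H s) + (\<Sum>s\<in>R. (r s - pmf p s) * H s)"
    by (simp add: algebra_simps flip: sum.distrib)
  also have "(\<Sum>s\<in>R. (r s - pmf p s) * H s) \<le> (\<Sum>s\<in>R. \<bar>pmf p s - r s\<bar>)"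
  proof (rule sum_mono)
    fix s assume "s \<in> R"
    then have "(r s - pmf p s) * H s \<le> \<bar>r s - pmf p s\<bar> * 1"
      using H_bounds[of s] by (intro mult_mono) auto
    then show "(r s - pmf p s) * H s \<le> \<bar>pmf p s - r s\<bar>"
      by simp
  qed
  finally show ?thesis
    using cost by (simp add: H_def)
qed

lemma coupling_rule_prediction_dev_le:
  fixes \<gamma> :: "('a \<times> 'k::finite) pmf"
  assumes R: "finite R" and p: "set_pmf p \<subseteq> R"
    and \<gamma>: "map_pmf fst \<gamma> = p" "map_pmf snd \<gamma> = q"
  shows "(\<Sum>y\<in>UNIV. \<bar>(\<Sum>s\<in>R. r s * coupling_rule p \<gamma> y0 s y) - pmf q y\<bar>) \<le> (\<Sum>s\<in>R. \<bar>pmf p s - r s\<bar>)"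
proof -
  let ?h = "coupling_rule p \<gamma> y0"
  have q: "pmf q y = (\<Sum>s\<in>R. pmf p s * ?h s y)" for y
    using pmf_map_snd_eq_sum[OF R set_pmf_subset_Times_if_map_fst[OF \<gamma>(1) p], of y] \<gamma>
    by (simp add: pmf_mult_coupling_rule[OF \<gamma>(1)])
  have "(\<Sum>y\<in>UNIV. \<bar>(\<Sum>s\<in>R. r s * ?h s y) - pmf q y\<bar>) = (\<Sum>y\<in>UNIV. \<bar>\<Sum>s\<in>R. (r s - pmf p s) * ?h s y\<bar>)"
    by (simp add: q algebra_simps flip: sum_subtractf)
  also have "\<dots> \<le> (\<Sum>y\<in>UNIV. \<Sum>s\<in>R. \<bar>pmf p s - r s\<bar> * ?h s y)"
    by (intro sum_mono order.trans[OF sum_abs])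
      (auto simp: abs_mult coupling_rule_nonneg abs_minus_commute)
  also have "\<dots> = (\<Sum>s\<in>R. \<bar>pmf p s - r s\<bar> * (\<Sum>y\<in>UNIV. ?h s y))"
    by (subst sum.swap) (simp add: sum_distrib_left)
  also have "\<dots> = (\<Sum>s\<in>R. \<bar>pmf p s - r s\<bar>)"
    by (simp add: sum_coupling_rule[OF \<gamma>(1)])
  finally show ?thesis .
qed

lemma sum_pos_neg_parts:
  fixes p r :: "'a \<Rightarrow> real"
  assumes "(\<Sum>s\<in>R. p s) = (\<Sum>s\<in>R. r s)"
  shows "(\<Sum>s\<in>R. max (p s - r s) 0) = (\<Sum>s\<in>R. max (r s - p s) 0)"
    and "(\<Sum>s\<in>R. \<bar>p s - r s\<bar>) = 2 * (\<Sum>s\<in>R. max (r s - p s) 0)"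
proof -
  have "max (p s - r s) 0 - max (r s - p s) 0 = p s - r s"
    and abs: "\<bar>p s - r s\<bar> = max (p s - r s) 0 + max (r s - p s) 0" for s
    by (auto simp: max_def)
  then have "(\<Sum>s\<in>R. max (p s - r s) 0) - (\<Sum>s\<in>R. max (r s - p s) 0) = (\<Sum>s\<in>R. p s) - (\<Sum>s\<in>R. r s)"
    by (simp flip: sum_subtractf)
  then show parts: "(\<Sum>s\<in>R. max (p s - r s) 0) = (\<Sum>s\<in>R. max (r s - p s) 0)"
    using assms by simp
  show "(\<Sum>s\<in>R. \<bar>p s - r s\<bar>) = 2 * (\<Sum>s\<in>R. max (r s - p s) 0)"
    using parts by (simp add: abs sum.distrib)
qed

lemma sum_outer_product_div:
  fixes a :: "'a \<Rightarrow> real" and b :: "'b \<Rightarrow> real"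
  assumes "finite R" "finite Y" "\<forall>s\<in>R. 0 \<le> a s" "\<forall>y\<in>Y. 0 \<le> b y"
    and "(\<Sum>s\<in>R. a s) = D" "(\<Sum>y\<in>Y. b y) = D"
  shows "s \<in> R \<Longrightarrow> (\<Sum>y\<in>Y. a s * b y / D) = a s"
    and "y \<in> Y \<Longrightarrow> (\<Sum>s\<in>R. a s * b y / D) = b y"
  using assms by (cases "D = 0"; simp add: sum_nonneg_eq_0_iff flip: sum_distrib_left sum_distrib_right sum_divide_distrib)+

text \<open>Moving a transport plan \<open>g\<close> to a new source marginal \<open>p\<close>: rows with excess mass are scaled
  down, and the removed mass, kept in the columns it came from, is spread over the rows with a
  deficit. Only the moved mass \<open>\<parallel>p - r\<parallel>\<^sub>1 / 2\<close> changes its cost, by at most \<open>C\<close> per unit.\<close>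

lemma transport_plan_change_source:
  fixes g c :: "'a \<Rightarrow> 'b::finite \<Rightarrow> real"
  defines "r s \<equiv> (\<Sum>y\<in>UNIV. g s y)"
  assumes R: "finite R"
    and g_nonneg: "\<And>s y. s \<in> R \<Longrightarrow> 0 \<le> g s y"
    and p_nonneg: "\<And>s. s \<in> R \<Longrightarrow> 0 \<le> p s"
    and mass: "(\<Sum>s\<in>R. p s) = (\<Sum>s\<in>R. r s)"
    and c: "\<And>s y. s \<in> R \<Longrightarrow> 0 \<le> c s y \<and> c s y \<le> C"
  shows "\<exists>G. (\<forall>s\<in>R. \<forall>y. 0 \<le> G s y) \<and> (\<forall>s\<in>R. (\<Sum>y\<in>UNIV. G s y) = p s)
    \<and> (\<forall>y. (\<Sum>s\<in>R. G s y) = (\<Sum>s\<in>R. g s y))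
    \<and> (\<Sum>s\<in>R. \<Sum>y\<in>UNIV. c s y * G s y)
        \<le> (\<Sum>s\<in>R. \<Sum>y\<in>UNIV. c s y * g s y) + C / 2 * (\<Sum>s\<in>R. \<bar>p s - r s\<bar>)"
proof -
  define excess where "excess s = max (r s - p s) 0" for s
  define deficit where "deficit s = max (p s - r s) 0" for s
  define k where "k s = excess s / r s" for s
  define D where "D = (\<Sum>s\<in>R. excess s)"
  define v where "v y = (\<Sum>s\<in>R. k s * g s y)" for y
  define G where "G s y = (1 - k s) * g s y + deficit s * v y / D" for s y
  have k_bounds: "0 \<le> k s \<and> k s \<le> 1" and k_mult: "k s * r s = excess s" if "s \<in> R" for s
    using p_nonneg[OF that] sum_nonneg[of UNIV "g s", OF g_nonneg[OF that]]
    by (auto simp: k_def excess_def r_def[symmetric] max_def divide_le_eq_1)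
  have v_sum: "(\<Sum>y\<in>UNIV. v y) = D"
  proof -
    have "(\<Sum>y\<in>UNIV. v y) = (\<Sum>s\<in>R. k s * r s)"
      unfolding v_def r_def by (subst sum.swap) (simp add: sum_distrib_left)
    also have "\<dots> = D"
      unfolding D_def by (rule sum.cong) (simp_all add: k_mult)
    finally show ?thesis .
  qed
  have v_nonneg: "\<forall>y\<in>UNIV. 0 \<le> v y"
    using k_bounds g_nonneg by (auto simp: v_def intro!: sum_nonneg)
  note parts = sum_pos_neg_parts[OF mass, folded deficit_def excess_def D_def]
  have deficit_nonneg: "\<forall>s\<in>R. 0 \<le> deficit s" and D_nonneg: "0 \<le> D"
    by (simp_all add: deficit_def D_def excess_def sum_nonneg)
  note moved = sum_outer_product_div[OF R finite deficit_nonneg v_nonneg parts(1) v_sum]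
  have "(\<Sum>s\<in>R. \<Sum>y\<in>UNIV. c s y * G s y)
      \<le> (\<Sum>s\<in>R. \<Sum>y\<in>UNIV. c s y * g s y + C * (deficit s * v y / D))"
  proof (intro sum_mono)
    fix s y assume s: "s \<in> R"
    have "c s y * ((1 - k s) * g s y) \<le> c s y * g s y"
      using c[OF s] k_bounds[OF s] g_nonneg[OF s] by (intro mult_left_mono mult_left_le_one_le) auto
    moreover have "c s y * (deficit s * v y / D) \<le> C * (deficit s * v y / D)"
      using c[OF s] v_nonneg D_nonneg by (intro mult_right_mono) (auto simp: deficit_def)
    ultimately show "c s y * G s y \<le> c s y * g s y + C * (deficit s * v y / D)"
      by (simp add: G_def distrib_left)
  qed
  also have "\<dots> = (\<Sum>s\<in>R. \<Sum>y\<in>UNIV. c s y * g s y) + C * (\<Sum>s\<in>R. \<Sum>y\<in>UNIV. deficit s * v y / D)"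
    by (simp add: sum.distrib sum_distrib_left)
  also have "(\<Sum>s\<in>R. \<Sum>y\<in>UNIV. deficit s * v y / D) = D"
    using moved(1) parts(1) by simp
  also have "C * D = C / 2 * (\<Sum>s\<in>R. \<bar>p s - r s\<bar>)"
    using parts(2) by simp
  finally have cost: "(\<Sum>s\<in>R. \<Sum>y\<in>UNIV. c s y * G s y)
      \<le> (\<Sum>s\<in>R. \<Sum>y\<in>UNIV. c s y * g s y) + C / 2 * (\<Sum>s\<in>R. \<bar>p s - r s\<bar>)" .
  have "(\<Sum>y\<in>UNIV. G s y) = p s" if s: "s \<in> R" for s
  proof -
    have "(\<Sum>y\<in>UNIV. G s y) = (1 - k s) * r s + deficit s"
      using moved(1)[OF s] by (simp add: G_def r_def sum.distrib sum_distrib_left deficit_def)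
    then show ?thesis
      using k_mult[OF s] by (simp add: algebra_simps excess_def deficit_def max_def split: if_split_asm)
  qed
  moreover have "(\<Sum>s\<in>R. G s y) = (\<Sum>s\<in>R. g s y)" for y
    using moved(2)[of y]
    by (simp add: G_def v_def sum.distrib sum_subtractf algebra_simps sum_distrib_right deficit_def)
  moreover have "0 \<le> G s y" if "s \<in> R" for s y
    using k_bounds[OF that] g_nonneg[OF that] v_nonneg D_nonneg by (auto simp: G_def deficit_def)
  ultimately show ?thesis
    using cost by blast
qed

lemma exists_pmf_with_marginals:
  fixes G :: "'a \<Rightarrow> 'b::finite \<Rightarrow> real"
  assumes R: "finite R" and p: "set_pmf p \<subseteq> R"
    and G_nonneg: "\<And>s y. s \<in> R \<Longrightarrow> 0 \<le> G s y"
    and rows: "\<And>s. s \<in> R \<Longrightarrow> (\<Sum>y\<in>UNIV. G s y) = pmf p s"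
    and cols: "\<And>y. (\<Sum>s\<in>R. G s y) = pmf q y"
  shows "\<exists>\<gamma>. map_pmf fst \<gamma> = p \<and> map_pmf snd \<gamma> = q \<and> set_pmf \<gamma> \<subseteq> R \<times> UNIV
    \<and> (\<forall>s\<in>R. \<forall>y. pmf \<gamma> (s, y) = G s y)"
proof -
  define G' where "G' z = (if fst z \<in> R then G (fst z) (snd z) else 0)" for z
  have G'_nonneg: "0 \<le> G' z" for z
    by (simp add: G'_def G_nonneg)
  have "(\<integral>\<^sup>+ z. ennreal (G' z) \<partial>count_space UNIV) = ennreal (\<Sum>z\<in>R \<times> UNIV. G' z)"
    using R G'_nonneg by (subst nn_integral_count_space') (auto simp: G'_def sum_ennreal)
  also have "(\<Sum>z\<in>R \<times> UNIV. G' z) = (\<Sum>s\<in>R. \<Sum>y\<in>UNIV. G' (s, y))"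
    by (simp add: sum.cartesian_product case_prod_beta)
  also have "\<dots> = (\<Sum>s\<in>R. pmf p s)"
    by (simp add: G'_def rows)
  also have "\<dots> = 1"
    using sum_pmf_eq_1[OF R p] .
  finally have pmf_\<gamma>: "pmf (embed_pmf G') z = G' z" for z
    using G'_nonneg by (intro pmf_embed_pmf) auto
  define \<gamma> where "\<gamma> = embed_pmf G'"
  have support: "set_pmf \<gamma> \<subseteq> R \<times> UNIV"
    by (auto simp: \<gamma>_def set_pmf_iff pmf_\<gamma> G'_def split: if_splits)
  have "pmf (map_pmf fst \<gamma>) s = pmf p s" for s
    using p by (cases "s \<in> R") (auto simp: pmf_map_fst_eq_sum \<gamma>_def pmf_\<gamma> G'_def rows set_pmf_iff)
  moreover have "pmf (map_pmf snd \<gamma>) y = pmf q y" for y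
    unfolding pmf_map_snd_eq_sum[OF R support] by (simp add: \<gamma>_def pmf_\<gamma> G'_def cols)
  ultimately show ?thesis
    using support by (intro exI[of _ \<gamma>]) (auto intro: pmf_eqI simp: \<gamma>_def pmf_\<gamma> G'_def)
qed

lemma exists_coupling_near_plan:
  fixes g :: "real^'k \<Rightarrow> 'k::finite \<Rightarrow> real"
  assumes R: "finite R" "R \<subseteq> prob_simplex" and p: "set_pmf p \<subseteq> R"
    and g_nonneg: "\<And>s y. s \<in> R \<Longrightarrow> 0 \<le> g s y"
    and cols: "\<And>y. (\<Sum>s\<in>R. g s y) = pmf q y"
  shows "\<exists>\<gamma>. map_pmf fst \<gamma> = p \<and> map_pmf snd \<gamma> = q \<and>
     coupling_cost \<gamma> \<le> (\<Sum>s\<in>R. \<Sum>y\<in>UNIV. lab_cost s y * g s y)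
                       + (\<Sum>s\<in>R. \<bar>pmf p s - (\<Sum>y\<in>UNIV. g s y)\<bar>)"
proof -
  have "(\<Sum>s\<in>R. \<Sum>y\<in>UNIV. g s y) = 1"
    by (subst sum.swap) (simp add: cols sum_pmf_eq_1)
  moreover have "(\<Sum>s\<in>R. pmf p s) = 1"
    using sum_pmf_eq_1[OF R(1) p] .
  moreover have "0 \<le> lab_cost s y \<and> lab_cost s y \<le> 2" if "s \<in> R" for s y
    using that R(2) lab_cost_nonneg lab_cost_le_2 by blast
  ultimately have "\<exists>G. (\<forall>s\<in>R. \<forall>y. 0 \<le> G s y) \<and> (\<forall>s\<in>R. (\<Sum>y\<in>UNIV. G s y) = pmf p s)
      \<and> (\<forall>y. (\<Sum>s\<in>R. G s y) = (\<Sum>s\<in>R. g s y))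
      \<and> (\<Sum>s\<in>R. \<Sum>y\<in>UNIV. lab_cost s y * G s y)
          \<le> (\<Sum>s\<in>R. \<Sum>y\<in>UNIV. lab_cost s y * g s y) + 2 / 2 * (\<Sum>s\<in>R. \<bar>pmf p s - (\<Sum>y\<in>UNIV. g s y)\<bar>)"
    using R(1) g_nonneg by (intro transport_plan_change_source) auto
  then obtain G where G: "\<forall>s\<in>R. \<forall>y. 0 \<le> G s y" "\<forall>s\<in>R. (\<Sum>y\<in>UNIV. G s y) = pmf p s"
      "\<forall>y. (\<Sum>s\<in>R. G s y) = pmf q y"
      "(\<Sum>s\<in>R. \<Sum>y\<in>UNIV. lab_cost s y * G s y)
        \<le> (\<Sum>s\<in>R. \<Sum>y\<in>UNIV. lab_cost s y * g s y) + (\<Sum>s\<in>R. \<bar>pmf p s - (\<Sum>y\<in>UNIV. g s y)\<bar>)"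
    using cols by auto
  then obtain \<gamma> where "map_pmf fst \<gamma> = p" "map_pmf snd \<gamma> = q" "set_pmf \<gamma> \<subseteq> R \<times> UNIV"
      "\<forall>s\<in>R. \<forall>y. pmf \<gamma> (s, y) = G s y"
    using exists_pmf_with_marginals[OF R(1) p, of G q] by auto
  with G(4) show ?thesis
    by (intro exI[of _ \<gamma>]) (simp add: coupling_cost_eq_sum[OF R(1)])
qed

lemma closed_prob_simplex: "closed (prob_simplex :: (real^'k::finite) set)"
proof -
  have "prob_simplex = (\<Inter>i. {x::real^'k. 0 \<le> x $ i}) \<inter> {x. (\<Sum>i\<in>UNIV. x $ i) = 1}"
    by (auto simp: prob_simplex_def)
  moreover have "closed {x::real^'k. (\<Sum>i\<in>UNIV. x $ i) = 1}"
    by (intro closed_Collect_eq continuous_intros)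
  moreover have "closed {x::real^'k. 0 \<le> x $ i}" for i
    by (intro closed_Collect_le continuous_intros)
  ultimately show ?thesis
    by (metis closed_INT closed_Int)
qed

lemma compl_msupport_null:
  fixes M :: "'a::second_countable_topology measure"
  assumes sets_M: "sets M = sets borel"
  shows "- msupport M \<in> null_sets M"
proof -
  define F where "F = {U. open U \<and> emeasure M U = 0}"
  have "- msupport M = \<Union>F"
    by (auto simp: msupport_def F_def)
  moreover obtain F' where "F' \<subseteq> F" "countable F'" "\<Union>F' = \<Union>F"
    using Lindelof[of F] by (auto simp: F_def)
  moreover have "(\<Union>U\<in>F'. U) \<in> null_sets M"
    using calculation sets_M by (intro null_sets_UN') (auto simp: F_def null_sets_def)
  ultimately show ?thesis
    by simp
qed

lemma integral_eq_sum_cells: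
  fixes \<phi> :: "'a \<Rightarrow> 'b::t1_space" and Y :: "'a \<Rightarrow> 'k::finite" and G :: "'b \<Rightarrow> 'k \<Rightarrow> real"
  assumes "prob_space M" and R: "finite R"
    and \<phi>[measurable]: "\<phi> \<in> borel_measurable M" and Y[measurable]: "Y \<in> measurable M (count_space UNIV)"
    and AE_R: "AE z in M. \<phi> z \<in> R"
    and G: "\<And>y. (\<lambda>s. G s y) \<in> borel_measurable borel"
  shows "(\<integral>z. G (\<phi> z) (Y z) \<partial>M) = (\<Sum>s\<in>R. \<Sum>y\<in>UNIV. G s y * measure M {z\<in>space M. \<phi> z = s \<and> Y z = y})"
proof -
  interpret prob_space M by fact
  define cell where "cell s y = {z\<in>space M. \<phi> z = s \<and> Y z = y}" for s y
  have cell_sets[measurable]: "cell s y \<in> sets M" for s y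
    unfolding cell_def by measurable
  have "(\<lambda>z. G (\<phi> z) (Y z)) \<in> borel_measurable M"
    by (rule measurable_compose_countable'[where I=UNIV and g=Y])
      (use measurable_compose[OF \<phi> G] in auto)
  then have "(\<integral>z. G (\<phi> z) (Y z) \<partial>M) = (\<integral>z. (\<Sum>s\<in>R. \<Sum>y\<in>UNIV. G s y * indicator (cell s y) z) \<partial>M)"
  proof (rule integral_cong_AE)
    show "AE z in M. G (\<phi> z) (Y z) = (\<Sum>s\<in>R. \<Sum>y\<in>UNIV. G s y * indicator (cell s y) z)"
      using AE_R AE_space
    proof eventually_elim
      case (elim z)
      then have "(\<Sum>s\<in>R. \<Sum>y\<in>UNIV. G s y * indicator (cell s y) z)
          = (\<Sum>s\<in>R. if s = \<phi> z then G s (Y z) else 0)"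
        by (intro sum.cong refl) (auto simp: cell_def indicator_def sum.delta')
      also have "\<dots> = G (\<phi> z) (Y z)"
        using elim R by (simp add: sum.delta')
      finally show ?case ..
    qed
  qed measurable
  also have "\<dots> = (\<Sum>s\<in>R. \<Sum>y\<in>UNIV. (\<integral>z. G s y * indicator (cell s y) z \<partial>M))"
  proof -
    have integrable: "integrable M (\<lambda>z. G s y * indicator (cell s y) z)" for s y
      by (intro integrable_mult_right) (simp add: integrable_indicator_iff emeasure_eq_measure)
    moreover have "integrable M (\<lambda>z. \<Sum>y\<in>UNIV. G s y * indicator (cell s y) z)" for s
      by (rule Bochner_Integration.integrable_sum) (rule integrable)
    ultimately show ?thesis
      by (simp only: Bochner_Integration.integral_sum)
  qed
  also have "\<dots> = (\<Sum>s\<in>R. \<Sum>y\<in>UNIV. G s y * measure M (cell s y))"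
    by (intro sum.cong refl) (simp add: Int_absorb2)
  finally show ?thesis
    by (simp add: cell_def)
qed

section \<open>The calibrated score model\<close>

locale calibrated_predictor =
  fixes \<mu> :: "('x::polish_space \<times> 'k::finite \<times> nat) measure"
    and m :: nat and f :: "'x \<Rightarrow> nat \<Rightarrow> real^'k"
  assumes problem: "classif_problem \<mu> m"
    and measurable_f: "\<forall>a<m. (\<lambda>x. f x a) \<in> borel_measurable borel"
    and f_simplex: "\<forall>x. \<forall>a<m. f x a \<in> prob_simplex"
    and calibrated: "calibrated \<mu> f m"
    and finite_supports: "\<forall>a<m. finite (msupport (pushf \<mu> f a))"
begin

abbreviation scores :: "nat \<Rightarrow> (real^'k) set" where
  "scores a \<equiv> msupport (pushf \<mu> f a)"

abbreviation score_prob :: "nat \<Rightarrow> real^'k \<Rightarrow> real" where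
  "score_prob a s \<equiv> measure (pushf \<mu> f a) {s}"

abbreviation score_dev :: "(real^'k) pmf \<Rightarrow> nat \<Rightarrow> real" where
  "score_dev p a \<equiv> \<Sum>s\<in>scores a. \<bar>pmf p s - score_prob a s\<bar>"

lemma prob_space_\<mu>: "prob_space \<mu>"
  using problem by (simp add: classif_problem_def)

lemma sets_\<mu>: "sets \<mu> = sets (borel \<Otimes>\<^sub>M (count_space UNIV \<Otimes>\<^sub>M count_space {..<m}))"
  using problem by (simp add: classif_problem_def)

lemma m_pos: "0 < m"
proof (rule ccontr)
  assume "\<not> 0 < m"
  then have "space \<mu> = {}"
    using sets_eq_imp_space_eq[OF sets_\<mu>] by (simp add: space_pair_measure)
  then show False
    using prob_space.not_empty[OF prob_space_\<mu>] by simp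
qed

lemma measurable_\<mu>_iff:
  "measurable \<mu> N = measurable (borel \<Otimes>\<^sub>M (count_space UNIV \<Otimes>\<^sub>M count_space {..<m})) N"
  using sets_\<mu> by (intro measurable_cong_sets) auto

lemma Aev_in_sets: "Aev \<mu> a \<in> sets \<mu>"
  unfolding Aev_def sets_\<mu> sets_eq_imp_space_eq[OF sets_\<mu>] by measurable

lemma measurable_score [measurable]: "a < m \<Longrightarrow> (\<lambda>z. f (fst z) a) \<in> borel_measurable \<mu>"
  unfolding measurable_\<mu>_iff using measurable_f by (auto intro!: measurable_compose[OF measurable_fst])

lemma measurable_label [measurable]: "(\<lambda>z. fst (snd z)) \<in> measurable \<mu> (count_space UNIV)"
  unfolding measurable_\<mu>_iff by measurable

lemma sets_condA [measurable_cong]: "sets (condA \<mu> a) = sets \<mu>"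
  by (simp add: condA_def)

lemma space_condA: "space (condA \<mu> a) = space \<mu>"
  by (simp add: condA_def)

lemma emeasure_Aev: "emeasure \<mu> (Aev \<mu> a) = measure \<mu> (Aev \<mu> a)"
  using prob_space_\<mu> by (simp add: prob_space_def finite_measure.emeasure_eq_measure)

lemma measurable_condA_iff: "measurable (condA \<mu> a) N = measurable \<mu> N"
  by (intro measurable_cong_sets) (simp_all add: sets_condA)

lemma prob_space_condA: "a < m \<Longrightarrow> prob_space (condA \<mu> a)"
  unfolding condA_def using problem Aev_in_sets
  by (intro prob_space_uniform_measure) (auto simp: classif_problem_def emeasure_Aev)

lemma measure_condA:
  assumes "a < m" "A \<in> sets \<mu>"
  shows "measure (condA \<mu> a) A = measure \<mu> (A \<inter> Aev \<mu> a) / measure \<mu> (Aev \<mu> a)"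
  unfolding condA_def using assms Aev_in_sets problem
  by (subst measure_uniform_measure) (auto simp: classif_problem_def emeasure_Aev Int_commute)

lemma sets_pushf [simp, measurable_cong]: "sets (pushf \<mu> f a) = sets borel"
  by (simp add: pushf_def)

lemma space_pushf [simp]: "space (pushf \<mu> f a) = UNIV"
  by (simp add: pushf_def)

lemma prob_space_pushf: "a < m \<Longrightarrow> prob_space (pushf \<mu> f a)"
  unfolding pushf_def by (intro prob_space.prob_space_distr prob_space_condA) simp_all

lemma emeasure_pushf:
  "a < m \<Longrightarrow> B \<in> sets borel \<Longrightarrow>
    emeasure (pushf \<mu> f a) B = emeasure (condA \<mu> a) ((\<lambda>z. f (fst z) a) -` B \<inter> space \<mu>)"
  unfolding pushf_def by (subst emeasure_distr) (simp_all add: space_condA)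

lemma measure_pushf:
  "a < m \<Longrightarrow> B \<in> sets borel \<Longrightarrow>
    measure (pushf \<mu> f a) B = measure (condA \<mu> a) ((\<lambda>z. f (fst z) a) -` B \<inter> space \<mu>)"
  by (simp add: measure_def emeasure_pushf)

lemma finite_scores: "a < m \<Longrightarrow> finite (scores a)"
  using finite_supports by blast

lemma compl_scores_null: "- scores a \<in> null_sets (pushf \<mu> f a)"
  by (rule compl_msupport_null) simp

lemma sum_score_prob: "a < m \<Longrightarrow> (\<Sum>s\<in>scores a. score_prob a s) = 1"
proof -
  assume a: "a < m"
  interpret prob_space "pushf \<mu> f a"
    using prob_space_pushf[OF a] .
  have "(\<Sum>s\<in>scores a. score_prob a s) = prob (scores a)"
    using finite_scores[OF a] by (intro measure_eq_sum_singleton[symmetric]) auto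
  also have "\<dots> = 1 - prob (- scores a)"
    using prob_compl[of "scores a"] finite_scores[OF a] by (simp add: finite_imp_closed Compl_eq_Diff_UNIV)
  finally show ?thesis
    using compl_scores_null[of a] by (simp add: measure_def null_sets_def)
qed

lemma scores_subset_simplex: "a < m \<Longrightarrow> scores a \<subseteq> prob_simplex"
proof
  fix s assume a: "a < m" and s: "s \<in> scores a"
  have "(\<lambda>z. f (fst z) a) -` (- prob_simplex) \<inter> space \<mu> = {}"
    using f_simplex a by auto
  then have "emeasure (pushf \<mu> f a) (- prob_simplex) = 0"
    using a closed_prob_simplex by (subst emeasure_pushf) (auto intro: borel_open simp: open_Compl)
  with s show "s \<in> prob_simplex"
    using closed_prob_simplex by (auto simp: msupport_def)
qed

lemma AE_score_in_scores: "a < m \<Longrightarrow> AE z in condA \<mu> a. f (fst z) a \<in> scores a"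
proof -
  assume a: "a < m"
  have "- scores a \<in> sets borel" "emeasure (pushf \<mu> f a) (- scores a) = 0"
    using compl_scores_null[of a] by auto
  then have "emeasure (condA \<mu> a) ((\<lambda>z. f (fst z) a) -` (- scores a) \<inter> space \<mu>) = 0"
    using emeasure_pushf[OF a] by simp
  moreover have "(\<lambda>z. f (fst z) a) -` (- scores a) \<inter> space \<mu> \<in> sets (condA \<mu> a)"
    using measurable_score[OF a] \<open>- scores a \<in> sets borel\<close> by (auto simp: sets_condA)
  ultimately show ?thesis
    by (intro AE_I[where N="(\<lambda>z. f (fst z) a) -` (- scores a) \<inter> space \<mu>"]) (auto simp: space_condA)
qed

lemma measure_score_label_cell:
  assumes a: "a < m"
  shows "measure (condA \<mu> a) {z\<in>space (condA \<mu> a). f (fst z) a = s \<and> fst (snd z) = y}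
    = s $ y * score_prob a s"
proof -
  interpret prob_space \<mu>
    by (rule prob_space_\<mu>)
  let ?A = "Aev \<mu> a" and ?P = "(\<lambda>z. f (fst z) a) -` {s} \<inter> space \<mu>"
  let ?C = "{z\<in>space \<mu>. f (fst z) a = s \<and> fst (snd z) = y}"
  have singleton: "{s} \<in> sets borel"
    by (rule borel_closed) simp
  have P: "?P \<in> sets \<mu>"
    using measurable_sets[OF measurable_score[OF a] singleton] .
  have "?C = ?P \<inter> ((\<lambda>z. fst (snd z)) -` {y} \<inter> space \<mu>)"
    by auto
  then have C: "?C \<in> sets \<mu>"
    using P measurable_sets[OF measurable_label, of "{y}"] by auto
  have "measure \<mu> {z \<in> ?A. fst (snd z) = y \<and> f (fst z) a \<in> {s}}
      = (\<integral>z. indicator {z \<in> ?A. f (fst z) a \<in> {s}} z * (f (fst z) a $ y) \<partial>\<mu>)"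
    using calibrated a singleton unfolding calibrated_def by blast
  also have "{z \<in> ?A. f (fst z) a \<in> {s}} = ?P \<inter> ?A"
    by (auto simp: Aev_def)
  also have "(\<integral>z. indicator (?P \<inter> ?A) z * (f (fst z) a $ y) \<partial>\<mu>) = (\<integral>z. indicator (?P \<inter> ?A) z * s $ y \<partial>\<mu>)"
    by (intro Bochner_Integration.integral_cong refl) (simp add: indicator_def)
  also have "\<dots> = s $ y * measure \<mu> (?P \<inter> ?A)"
    using P Aev_in_sets by simp
  also have "{z \<in> ?A. fst (snd z) = y \<and> f (fst z) a \<in> {s}} = ?C \<inter> ?A"
    by (auto simp: Aev_def)
  finally have "measure \<mu> (?C \<inter> ?A) / measure \<mu> ?A = s $ y * (measure \<mu> (?P \<inter> ?A) / measure \<mu> ?A)"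
    by simp
  then show ?thesis
    using a P C singleton by (simp add: space_condA measure_condA measure_pushf)
qed

lemma randErr_eq:
  assumes a: "a < m" and p: "finite (set_pmf (p a))" and \<gamma>: "map_pmf fst (\<gamma> a) = p a"
  shows "randErr \<mu> (hhat f p \<gamma> y0) a
    = (\<Sum>s\<in>scores a. score_prob a s * (\<Sum>y\<in>UNIV. coupling_rule (p a) (\<gamma> a) y0 s y * (1 - s $ y)))"
proof -
  let ?h = "coupling_rule (p a) (\<gamma> a) y0"
  define G where "G s y' = 1 - ?h s y'" for s y'
  have G: "(\<Sum>y\<in>UNIV - {y'}. ?h s y) = G s y'" for s y'
    using sum_coupling_rule[OF \<gamma>, of y0 s] by (simp add: G_def sum_diff1)
  have "randErr \<mu> (hhat f p \<gamma> y0) a = (\<integral>z. G (f (fst z) a) (fst (snd z)) \<partial>condA \<mu> a)"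
    by (simp add: randErr_def hhat_eq_coupling_rule G)
  also have "\<dots> = (\<Sum>s\<in>scores a. \<Sum>y\<in>UNIV. G s y * (s $ y * score_prob a s))"
    using measurable_score[OF a] measurable_label
    by (subst integral_eq_sum_cells[OF prob_space_condA[OF a] finite_scores[OF a] _ _ AE_score_in_scores[OF a]])
      (simp_all add: measure_score_label_cell[OF a] G_def measurable_condA_iff
        borel_measurable_diff borel_measurable_coupling_rule[OF p])
  also have "\<dots> = (\<Sum>s\<in>scores a. score_prob a s * (\<Sum>y\<in>UNIV. ?h s y * (1 - s $ y)))"
  proof (intro sum.cong refl)
    fix s assume "s \<in> scores a"
    then have "(\<Sum>y\<in>UNIV. s $ y) = 1"
      using scores_subset_simplex[OF a] by (auto simp: prob_simplex_def)
    then show "(\<Sum>y\<in>UNIV. G s y * (s $ y * score_prob a s)) = score_prob a s * (\<Sum>y\<in>UNIV. ?h s y * (1 - s $ y))"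
      using sum_coupling_rule[OF \<gamma>, of y0 s]
      by (simp add: G_def algebra_simps sum_subtractf sum_distrib_left flip: sum_distrib_right)
  qed
  finally show ?thesis .
qed

lemma predProb_eq:
  assumes a: "a < m" and p: "finite (set_pmf (p a))"
  shows "predProb \<mu> (hhat f p \<gamma> y0) a y = (\<Sum>s\<in>scores a. score_prob a s * coupling_rule (p a) (\<gamma> a) y0 s y)"
proof -
  let ?h = "coupling_rule (p a) (\<gamma> a) y0"
  have "predProb \<mu> (hhat f p \<gamma> y0) a y = (\<integral>z. (\<lambda>s y'. ?h s y) (f (fst z) a) (fst (snd z)) \<partial>condA \<mu> a)"
    by (simp add: predProb_def hhat_eq_coupling_rule)
  also have "\<dots> = (\<Sum>s\<in>scores a. \<Sum>y'\<in>UNIV. ?h s y * (s $ y' * score_prob a s))"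
    using measurable_score[OF a] measurable_label
    by (subst integral_eq_sum_cells[where G="\<lambda>s y'. ?h s y" and Y="\<lambda>z. fst (snd z)",
          OF prob_space_condA[OF a] finite_scores[OF a] _ _ AE_score_in_scores[OF a]])
      (simp_all add: measure_score_label_cell[OF a] measurable_condA_iff borel_measurable_coupling_rule[OF p])
  also have "\<dots> = (\<Sum>s\<in>scores a. score_prob a s * ?h s y * (\<Sum>y'\<in>UNIV. s $ y'))"
    by (intro sum.cong refl) (simp add: sum_distrib_left sum_distrib_right mult_ac)
  also have "\<dots> = (\<Sum>s\<in>scores a. score_prob a s * ?h s y)"
    using scores_subset_simplex[OF a] by (intro sum.cong refl) (auto simp: prob_simplex_def)
  finally show ?thesis .
qed

lemma coupling_marginals:
  assumes a: "a < m" and \<gamma>: "\<gamma> \<in> couplings (pushf \<mu> f a) q"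
  shows sets_coupling: "sets \<gamma> = sets (borel \<Otimes>\<^sub>M count_space UNIV)"
    and emeasure_coupling_fst: "\<And>B. B \<in> sets borel \<Longrightarrow> emeasure \<gamma> (B \<times> UNIV) = emeasure (pushf \<mu> f a) B"
    and emeasure_coupling_snd: "\<And>C. emeasure \<gamma> (UNIV \<times> C) = emeasure (measure_pmf q) C"
    and prob_space_coupling: "prob_space \<gamma>"
proof -
  show sets: "sets \<gamma> = sets (borel \<Otimes>\<^sub>M count_space UNIV)"
    using \<gamma> by (simp add: couplings_def)
  have space: "space \<gamma> = UNIV"
    using sets_eq_imp_space_eq[OF sets] by (simp add: space_pair_measure)
  have fst: "fst \<in> measurable \<gamma> borel" and snd: "snd \<in> measurable \<gamma> (count_space UNIV)"
    by (simp_all add: measurable_cong_sets[OF sets refl])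
  have distr_fst: "distr \<gamma> borel fst = pushf \<mu> f a" and distr_snd: "distr \<gamma> (count_space UNIV) snd = measure_pmf q"
    using \<gamma> by (auto simp: couplings_def)
  show fst_marginal: "emeasure \<gamma> (B \<times> UNIV) = emeasure (pushf \<mu> f a) B" if "B \<in> sets borel" for B
    using that fst space by (simp add: distr_fst[symmetric] emeasure_distr vimage_fst)
  show "emeasure \<gamma> (UNIV \<times> C) = emeasure (measure_pmf q) C" for C
    using snd space by (simp add: distr_snd[symmetric] emeasure_distr vimage_snd)
  show "prob_space \<gamma>"
    using fst_marginal[of UNIV] prob_space.emeasure_space_1[OF prob_space_pushf[OF a]] space
    by (intro prob_spaceI) simp
qed

lemma singleton_in_sets_coupling:
  assumes a: "a < m" and \<gamma>: "\<gamma> \<in> couplings (pushf \<mu> f a) q"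
  shows "{z} \<in> sets \<gamma>"
proof -
  have "{fst z} \<times> {snd z} \<in> sets (borel \<Otimes>\<^sub>M count_space (UNIV :: 'k set))"
    by (intro pair_measureI) auto
  then show ?thesis
    using sets_coupling[OF a \<gamma>] by simp
qed

lemma coupling_null_outside_scores:
  assumes a: "a < m" and \<gamma>: "\<gamma> \<in> couplings (pushf \<mu> f a) q"
  shows "(- scores a) \<times> UNIV \<in> null_sets \<gamma>"
  using compl_scores_null[of a] emeasure_coupling_fst[OF a \<gamma>, of "- scores a"] sets_coupling[OF a \<gamma>]
  by (auto simp: null_sets_def)

lemma coupling_row_sum:
  assumes a: "a < m" and \<gamma>: "\<gamma> \<in> couplings (pushf \<mu> f a) q"
  shows "(\<Sum>y\<in>UNIV. measure \<gamma> {(s, y)}) = score_prob a s"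
proof -
  interpret prob_space \<gamma>
    by (rule prob_space_coupling[OF a \<gamma>])
  have "measure \<gamma> ({s} \<times> UNIV) = (\<Sum>z\<in>{s} \<times> UNIV. measure \<gamma> {z})"
    using singleton_in_sets_coupling[OF a \<gamma>]
    by (intro measure_eq_sum_singleton) (auto simp: emeasure_eq_measure)
  also have "\<dots> = (\<Sum>y\<in>UNIV. measure \<gamma> {(s, y)})"
    by (rule sum.reindex_cong[where l="\<lambda>y. (s, y)"]) (auto simp: inj_on_def)
  finally show ?thesis
    using emeasure_coupling_fst[OF a \<gamma>, of "{s}"] by (simp add: measure_def)
qed

lemma coupling_column_sum:
  assumes a: "a < m" and \<gamma>: "\<gamma> \<in> couplings (pushf \<mu> f a) q"
  shows "(\<Sum>s\<in>scores a. measure \<gamma> {(s, y)}) = pmf q y"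
proof -
  interpret prob_space \<gamma>
    by (rule prob_space_coupling[OF a \<gamma>])
  have closed: "closed (scores a)"
    using finite_scores[OF a] by (rule finite_imp_closed)
  then have cells_sets: "scores a \<times> {y} \<in> sets \<gamma>" "(- scores a) \<times> {y} \<in> sets \<gamma>"
    unfolding sets_coupling[OF a \<gamma>] by (auto intro!: pair_measureI borel_closed borel_open)
  have "pmf q y = measure \<gamma> (UNIV \<times> {y})"
    using emeasure_coupling_snd[OF a \<gamma>, of "{y}"] by (simp add: measure_def pmf.rep_eq)
  also have "\<dots> = measure \<gamma> (scores a \<times> {y}) + measure \<gamma> ((- scores a) \<times> {y})"
    using cells_sets by (subst finite_measure_Union[symmetric]) (auto intro!: arg_cong[where f=prob])
  also have "measure \<gamma> ((- scores a) \<times> {y}) = 0"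
    using cells_sets(2)
    by (intro measure_eq_0_null_sets null_sets_subset[OF coupling_null_outside_scores[OF a \<gamma>]]) auto
  also have "measure \<gamma> (scores a \<times> {y}) = (\<Sum>z\<in>scores a \<times> {y}. measure \<gamma> {z})"
    using finite_scores[OF a] singleton_in_sets_coupling[OF a \<gamma>]
    by (intro measure_eq_sum_singleton) (auto simp: emeasure_eq_measure)
  also have "\<dots> = (\<Sum>s\<in>scores a. measure \<gamma> {(s, y)})"
    by (rule sum.reindex_cong[where l="\<lambda>s. (s, y)"]) (auto simp: inj_on_def)
  finally show ?thesis
    by simp
qed

lemma nn_integral_lab_cost_coupling:
  assumes a: "a < m" and \<gamma>: "\<gamma> \<in> couplings (pushf \<mu> f a) q"
  shows "(\<integral>\<^sup>+ z. ennreal (lab_cost (fst z) (snd z)) \<partial>\<gamma>)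
    = ennreal (\<Sum>s\<in>scores a. \<Sum>y\<in>UNIV. lab_cost s y * measure \<gamma> {(s, y)})"
proof -
  interpret prob_space \<gamma>
    by (rule prob_space_coupling[OF a \<gamma>])
  let ?cells = "scores a \<times> (UNIV :: 'k set)"
  have cost_nonneg: "0 \<le> lab_cost (fst z) (snd z)" if "z \<in> ?cells" for z
    using that scores_subset_simplex[OF a] by (auto intro!: lab_cost_nonneg)
  have "AE z in \<gamma>. z \<in> ?cells"
    using coupling_null_outside_scores[OF a \<gamma>] by (rule AE_I') auto
  then have "(\<integral>\<^sup>+ z. ennreal (lab_cost (fst z) (snd z)) \<partial>\<gamma>)
      = (\<integral>\<^sup>+ z. (\<Sum>w\<in>?cells. ennreal (lab_cost (fst w) (snd w)) * indicator {w} z) \<partial>\<gamma>)"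
    using finite_scores[OF a]
    by (intro nn_integral_cong_AE) (auto elim!: AE_mp simp: indicator_def sum.delta if_distrib cong: if_cong)
  also have "\<dots> = (\<Sum>w\<in>?cells. ennreal (lab_cost (fst w) (snd w)) * emeasure \<gamma> {w})"
    using singleton_in_sets_coupling[OF a \<gamma>]
    by (subst nn_integral_sum) (auto intro!: sum.cong nn_integral_cmult_indicator)
  also have "\<dots> = (\<Sum>w\<in>?cells. ennreal (lab_cost (fst w) (snd w) * measure \<gamma> {w}))"
    using cost_nonneg by (intro sum.cong refl) (simp add: emeasure_eq_measure ennreal_mult)
  also have "\<dots> = ennreal (\<Sum>w\<in>?cells. lab_cost (fst w) (snd w) * measure \<gamma> {w})"
    using cost_nonneg by (intro sum_ennreal) simp
  finally show ?thesis
    by (simp add: sum.cartesian_product case_prod_beta)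
qed

lemma pair_measure_in_couplings:
  assumes a: "a < m"
  shows "pushf \<mu> f a \<Otimes>\<^sub>M measure_pmf q \<in> couplings (pushf \<mu> f a) q"
proof -
  interpret P: prob_space "pushf \<mu> f a"
    by (rule prob_space_pushf[OF a])
  let ?\<gamma> = "pushf \<mu> f a \<Otimes>\<^sub>M measure_pmf q"
  have sets: "sets ?\<gamma> = sets (borel \<Otimes>\<^sub>M count_space UNIV)"
    by (intro sets_pair_measure_cong) auto
  have "distr ?\<gamma> borel fst = distr ?\<gamma> (pushf \<mu> f a) fst"
    by (intro distr_cong) auto
  also have "\<dots> = pushf \<mu> f a"
    by (rule prob_space.distr_pair_fst[OF prob_space_measure_pmf])
  finally have "distr ?\<gamma> borel fst = pushf \<mu> f a" .
  moreover have "distr ?\<gamma> (count_space UNIV) snd = measure_pmf q"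
  proof (rule measure_eqI)
    fix C assume "C \<in> sets (distr ?\<gamma> (count_space UNIV) snd)"
    have "emeasure (distr ?\<gamma> (count_space UNIV) snd) C = emeasure ?\<gamma> (UNIV \<times> C)"
      by (subst emeasure_distr) (auto simp: measurable_cong_sets[OF sets refl] space_pair_measure vimage_snd)
    also have "\<dots> = emeasure (measure_pmf q) C"
      using P.emeasure_space_1
      by (subst sigma_finite_measure.emeasure_pair_measure_Times[OF
            prob_space_imp_sigma_finite[OF prob_space_measure_pmf]]) auto
    finally show "emeasure (distr ?\<gamma> (count_space UNIV) snd) C = emeasure (measure_pmf q) C" .
  qed simp
  ultimately show ?thesis
    using sets by (simp add: couplings_def)
qed

text \<open>The infimum defining \<open>W\<^sub>1(r\<^sub>a, q)\<close> is approached by couplings supported on finitely many cells,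
  each of which \<open>exists_coupling_near_plan\<close> moves to the empirical distribution \<open>p\<close>.\<close>

lemma exists_coupling_cost_le_W1:
  assumes a: "a < m" and p: "set_pmf p \<subseteq> scores a" and e: "0 < e"
  shows "\<exists>\<gamma>. map_pmf fst \<gamma> = p \<and> map_pmf snd \<gamma> = q \<and>
    coupling_cost \<gamma> \<le> enn2real (W1 (pushf \<mu> f a) q) + e + score_dev p a"
proof -
  let ?F = "\<lambda>\<gamma>. \<integral>\<^sup>+ z. ennreal (lab_cost (fst z) (snd z)) \<partial>\<gamma>"
  let ?V = "\<lambda>\<gamma>. \<Sum>s\<in>scores a. \<Sum>y\<in>UNIV. lab_cost s y * measure \<gamma> {(s, y)}"
  define w where "w = W1 (pushf \<mu> f a) q"
  have w: "w = (INF \<gamma>\<in>couplings (pushf \<mu> f a) q. ?F \<gamma>)"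
    by (simp add: w_def W1_def)
  have "w \<le> ?F (pushf \<mu> f a \<Otimes>\<^sub>M measure_pmf q)"
    unfolding w by (rule INF_lower[OF pair_measure_in_couplings[OF a]])
  then have w_finite: "w < top"
    by (auto simp: nn_integral_lab_cost_coupling[OF a pair_measure_in_couplings[OF a]] top_unique less_le)
  then have "(INF \<gamma>\<in>couplings (pushf \<mu> f a) q. ?F \<gamma>) < w + ennreal e"
    using e by (simp add: w[symmetric] ennreal_less_top ennreal_add_left_cancel_less less_le)
  then obtain \<gamma> where \<gamma>: "\<gamma> \<in> couplings (pushf \<mu> f a) q" "?F \<gamma> < w + ennreal e"
    by (auto simp: INF_less_iff)
  then have "ennreal (?V \<gamma>) < ennreal (enn2real w + e)"
    using w_finite e by (simp add: nn_integral_lab_cost_coupling[OF a] ennreal_plus less_top)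
  then have V: "?V \<gamma> < enn2real w + e"
    by (meson ennreal_leI not_le)
  obtain \<gamma>' where "map_pmf fst \<gamma>' = p" "map_pmf snd \<gamma>' = q"
      "coupling_cost \<gamma>' \<le> ?V \<gamma> + score_dev p a"
    using exists_coupling_near_plan[OF finite_scores[OF a] scores_subset_simplex[OF a] p,
        where g="\<lambda>s y. measure \<gamma> {(s, y)}"]
      coupling_column_sum[OF a \<gamma>(1)] coupling_row_sum[OF a \<gamma>(1)] by auto
  then show ?thesis
    using V by (intro exI[of _ \<gamma>']) (auto simp: w_def)
qed

lemma finite_set_pmf_if_scores: "set_pmf p \<subseteq> scores a \<Longrightarrow> a < m \<Longrightarrow> finite (set_pmf p)"
  using finite_scores finite_subset by blast

lemma optimal_transport_obj_le:
  assumes p: "\<forall>a<m. set_pmf (p a) \<subseteq> scores a" and opt: "is_opt p m q \<gamma>"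
  shows "transport_obj m \<gamma> \<le> (\<Sum>a<m. enn2real (W1 (pushf \<mu> f a) q')) + (\<Sum>a<m. score_dev (p a) a)"
proof (rule field_le_epsilon)
  fix e :: real assume e: "0 < e"
  have "\<forall>a\<in>{..<m}. \<exists>\<gamma>'. map_pmf fst \<gamma>' = p a \<and> map_pmf snd \<gamma>' = q' \<and>
      coupling_cost \<gamma>' \<le> enn2real (W1 (pushf \<mu> f a) q') + e / m + score_dev (p a) a"
    using p e m_pos by (auto intro!: exists_coupling_cost_le_W1)
  then have "\<exists>\<gamma>'. \<forall>a\<in>{..<m}. map_pmf fst (\<gamma>' a) = p a \<and> map_pmf snd (\<gamma>' a) = q' \<and>
      coupling_cost (\<gamma>' a) \<le> enn2real (W1 (pushf \<mu> f a) q') + e / m + score_dev (p a) a"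
    by (rule bchoice)
  then obtain \<gamma>' where \<gamma>': "\<forall>a\<in>{..<m}. map_pmf fst (\<gamma>' a) = p a \<and> map_pmf snd (\<gamma>' a) = q' \<and>
      coupling_cost (\<gamma>' a) \<le> enn2real (W1 (pushf \<mu> f a) q') + e / m + score_dev (p a) a" ..
  have "feasible p m q' \<gamma>'"
    using \<gamma>' by (auto simp: feasible_def)
  then have "transport_obj m \<gamma> \<le> transport_obj m \<gamma>'"
    using opt by (auto simp: is_opt_def)
  also have "\<dots> \<le> (\<Sum>a<m. enn2real (W1 (pushf \<mu> f a) q') + e / m + score_dev (p a) a)"
    unfolding transport_obj_eq_sum_coupling_cost using \<gamma>' by (intro sum_mono) auto
  also have "\<dots> = (\<Sum>a<m. enn2real (W1 (pushf \<mu> f a) q')) + (\<Sum>a<m. score_dev (p a) a) + e"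
    using m_pos by (simp add: sum.distrib)
  finally show "transport_obj m \<gamma> \<le> (\<Sum>a<m. enn2real (W1 (pushf \<mu> f a) q')) + (\<Sum>a<m. score_dev (p a) a) + e" .
qed

lemma excess_error_le:
  assumes p: "\<forall>a<m. set_pmf (p a) \<subseteq> scores a"
    and dev: "\<forall>a<m. score_dev (p a) a \<le> B a" and opt: "is_opt p m q \<gamma>"
  shows "(\<Sum>a<m. randErr \<mu> (hhat f p \<gamma> y0) a) - errstar \<mu> f m \<le> (\<Sum>a<m. 3 / 2 * B a)"
proof -
  have \<gamma>: "map_pmf fst (\<gamma> a) = p a" if "a < m" for a
    using opt that by (simp add: is_opt_def feasible_def)
  have fin: "finite (set_pmf (p a))" if "a < m" for a
    using p that finite_set_pmf_if_scores by blast
  have "randErr \<mu> (hhat f p \<gamma> y0) a \<le> coupling_cost (\<gamma> a) / 2 + score_dev (p a) a" if a: "a < m" for a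
    unfolding randErr_eq[where p=p and \<gamma>=\<gamma>, OF a fin[OF a] \<gamma>[OF a]] using p a
    by (intro coupling_rule_error_le finite_scores scores_subset_simplex \<gamma>) auto
  then have "(\<Sum>a<m. randErr \<mu> (hhat f p \<gamma> y0) a) \<le> (\<Sum>a<m. coupling_cost (\<gamma> a) / 2 + score_dev (p a) a)"
    by (intro sum_mono) simp
  also have "\<dots> = transport_obj m \<gamma> / 2 + (\<Sum>a<m. score_dev (p a) a)"
    by (simp add: transport_obj_eq_sum_coupling_cost sum.distrib sum_divide_distrib)
  finally have err: "(\<Sum>a<m. randErr \<mu> (hhat f p \<gamma> y0) a) \<le> transport_obj m \<gamma> / 2 + (\<Sum>a<m. score_dev (p a) a)" .
  have "2 * (\<Sum>a<m. randErr \<mu> (hhat f p \<gamma> y0) a) - 3 * (\<Sum>a<m. score_dev (p a) a)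
      \<le> (INF q'\<in>(UNIV :: 'k pmf set). \<Sum>a<m. enn2real (W1 (pushf \<mu> f a) q'))"
  proof (rule cINF_greatest)
    fix q' :: "'k pmf"
    show "2 * (\<Sum>a<m. randErr \<mu> (hhat f p \<gamma> y0) a) - 3 * (\<Sum>a<m. score_dev (p a) a)
        \<le> (\<Sum>a<m. enn2real (W1 (pushf \<mu> f a) q'))"
      using err optimal_transport_obj_le[OF p opt, of q'] by linarith
  qed simp
  then have "(\<Sum>a<m. randErr \<mu> (hhat f p \<gamma> y0) a) - errstar \<mu> f m \<le> 3 / 2 * (\<Sum>a<m. score_dev (p a) a)"
    by (simp add: errstar_def)
  also have "\<dots> \<le> (\<Sum>a<m. 3 / 2 * B a)"
    unfolding sum_distrib_left[symmetric] using dev by (intro mult_left_mono sum_mono) auto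
  finally show ?thesis .
qed

lemma DPGap_le:
  assumes p: "\<forall>a<m. set_pmf (p a) \<subseteq> scores a"
    and dev: "\<forall>a<m. score_dev (p a) a \<le> B a" and feasible: "feasible p m q \<gamma>"
  shows "DPGap \<mu> (hhat f p \<gamma> y0) m \<le> Max (B ` {..<m})"
proof -
  let ?P = "predProb \<mu> (hhat f p \<gamma> y0)"
  have fin: "finite (set_pmf (p a))" if "a < m" for a
    using p that finite_set_pmf_if_scores by blast
  have dev_q: "(\<Sum>y\<in>UNIV. \<bar>?P a y - pmf q y\<bar>) \<le> Max (B ` {..<m})" if a: "a < m" for a
  proof -
    have "(\<Sum>y\<in>UNIV. \<bar>?P a y - pmf q y\<bar>) \<le> score_dev (p a) a"
      unfolding predProb_eq[where p=p, OF a fin[OF a]] using p a feasible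
      by (intro coupling_rule_prediction_dev_le finite_scores) (auto simp: feasible_def)
    also have "\<dots> \<le> B a"
      using dev a by simp
    also have "\<dots> \<le> Max (B ` {..<m})"
      using a by (intro Max_ge) auto
    finally show ?thesis .
  qed
  have "(\<Sum>y\<in>UNIV. \<bar>?P a y - ?P a' y\<bar>) \<le> 2 * Max (B ` {..<m})" if "a < m" "a' < m" for a a'
  proof -
    have "(\<Sum>y\<in>UNIV. \<bar>?P a y - ?P a' y\<bar>) \<le> (\<Sum>y\<in>UNIV. \<bar>?P a y - pmf q y\<bar> + \<bar>?P a' y - pmf q y\<bar>)"
      by (intro sum_mono) linarith
    then show ?thesis
      using dev_q[OF that(1)] dev_q[OF that(2)] by (simp add: sum.distrib)
  qed
  moreover have "{(\<Sum>y\<in>UNIV. \<bar>?P a y - ?P a' y\<bar>) | a a'. a < m \<and> a' < m}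
      = (\<lambda>(a, a'). \<Sum>y\<in>UNIV. \<bar>?P a y - ?P a' y\<bar>) ` ({..<m} \<times> {..<m})"
    by auto
  ultimately have "Max {(\<Sum>y\<in>UNIV. \<bar>?P a y - ?P a' y\<bar>) | a a'. a < m \<and> a' < m} \<le> 2 * Max (B ` {..<m})"
    using m_pos by (subst Max_le_iff) auto
  then show ?thesis
    by (simp add: DPGap_def)
qed

end

section \<open>Concentration of the empirical score distributions\<close>

lemma indep_vars_PiM_components:
  assumes M: "\<And>i. i \<in> I \<Longrightarrow> prob_space (M i)" and I: "I \<noteq> {}"
  shows "prob_space.indep_vars (PiM I M) M (\<lambda>i x. x i) I"
proof -
  interpret prob_space "PiM I M"
    using M by (rule prob_space_PiM)
  have components: "(\<lambda>x. x i) \<in> measurable (PiM I M) (M i)" if "i \<in> I" for i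
    using that by measurable
  have "distr (PiM I M) (PiM I M) (\<lambda>x. \<lambda>i\<in>I. x i) = distr (PiM I M) (PiM I M) (\<lambda>x. x)"
    by (intro distr_cong) (auto simp: space_PiM restrict_def PiE_def extensional_def)
  also have "\<dots> = (\<Pi>\<^sub>M i\<in>I. distr (PiM I M) (M i) (\<lambda>x. x i))"
    using M by (simp add: distr_PiM_component cong: PiM_cong)
  finally show ?thesis
    using indep_vars_iff_distr_eq_PiM'[OF I components] by simp
qed

lemma PiM_component_event:
  assumes M: "\<And>i. i \<in> I \<Longrightarrow> prob_space (M i)" and a: "a \<in> I" and A: "A \<in> sets (M a)"
  shows "{\<omega>\<in>space (PiM I M). \<omega> a \<in> A} \<in> sets (PiM I M)"
    and "measure (PiM I M) {\<omega>\<in>space (PiM I M). \<omega> a \<in> A} = measure (M a) A"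
proof -
  have component: "(\<lambda>\<omega>. \<omega> a) \<in> measurable (PiM I M) (M a)"
    using a by measurable
  have event: "{\<omega>\<in>space (PiM I M). \<omega> a \<in> A} = (\<lambda>\<omega>. \<omega> a) -` A \<inter> space (PiM I M)"
    by auto
  show "{\<omega>\<in>space (PiM I M). \<omega> a \<in> A} \<in> sets (PiM I M)"
    unfolding event using measurable_sets[OF component A] .
  have d: "distr (PiM I M) (M a) (\<lambda>\<omega>. \<omega> a) = M a"
    by (rule distr_PiM_component[OF M a])
  have "measure (M a) A = measure (PiM I M) ((\<lambda>\<omega>. \<omega> a) -` A \<inter> space (PiM I M))"
    by (subst d[symmetric], rule measure_distr[OF component A])
  then show "measure (PiM I M) {\<omega>\<in>space (PiM I M). \<omega> a \<in> A} = measure (M a) A"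
    unfolding event ..
qed

lemma prob_empirical_frequency_deviation:
  assumes P: "prob_space P" and A: "A \<in> sets P" and n: "0 < n" and e: "0 \<le> e"
  shows "measure (PiM {..<n} (\<lambda>_. P))
      {x\<in>space (PiM {..<n} (\<lambda>_. P)). e \<le> \<bar>(\<Sum>i<n. indicator A (x i)) / real n - measure P A\<bar>}
    \<le> 2 * exp (- 2 * real n * e\<^sup>2)"
proof -
  let ?T = "PiM {..<n} (\<lambda>_. P)"
  interpret T: prob_space ?T
    using P by (intro prob_space_PiM)
  define X where "X = (\<lambda>i (x :: nat \<Rightarrow> 'a). (indicator A (x i) :: real))"
  have indicator_A[measurable]: "indicator A \<in> borel_measurable P"
    using A by simp
  have measurable_component: "(\<lambda>x. x i) \<in> measurable ?T P" if "i < n" for i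
    using measurable_component_singleton[of i "{..<n}" "\<lambda>_. P"] that by simp
  have component: "distr ?T P (\<lambda>x. x i) = P" if "i < n" for i
    using that P by (intro distr_PiM_component) auto
  have distr_X: "distr ?T borel (X i) = distr P borel (indicator A)" if "i < n" for i
  proof -
    have "distr ?T borel (X i) = distr (distr ?T P (\<lambda>x. x i)) borel (indicator A)"
      unfolding X_def by (rule distr_distr[OF indicator_A measurable_component[OF that], symmetric, unfolded comp_def])
    then show ?thesis
      using component[OF that] by simp
  qed
  have indep: "T.indep_vars (\<lambda>_. P) (\<lambda>i x. x i) {..<n}"
    using P n by (intro indep_vars_PiM_components) auto
  interpret Hoeffding_ineq_iid ?T "{..<n}" X "X 0" 0 1 "measure P A"
  proof unfold_locales
    show "T.indep_vars (\<lambda>_. borel) X {..<n}"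
      unfolding X_def using indicator_A by (intro T.indep_vars_compose2[OF indep]) simp
    show "distr ?T borel (X i) = distr ?T borel (X 0)" if "i \<in> {..<n}" for i
      using that n by (simp add: distr_X)
    show "X 0 \<in> borel_measurable ?T"
      using measurable_compose[OF measurable_component[OF n] indicator_A] by (simp add: X_def)
    have "T.expectation (X 0) = (\<integral>x. indicator A x \<partial>distr ?T P (\<lambda>x. x 0))"
      unfolding X_def by (rule integral_distr[OF measurable_component[OF n] indicator_A, symmetric])
    then show "measure P A \<equiv> T.expectation (X 0)"
      using component[of 0] n A by simp
  qed (simp_all add: X_def)
  have "T.prob {x\<in>space ?T. \<bar>(\<Sum>i\<in>{..<n}. X i x) / real (card {..<n}) - measure P A\<bar> \<ge> e}
      \<le> 2 * exp (-2 * real (card {..<n}) * e\<^sup>2 / (1 - 0)\<^sup>2)"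
    using n by (intro Hoeffding_ineq_abs_ge'[OF e]) auto
  then show ?thesis
    by (simp add: X_def)
qed

lemma pmf_rhat:
  assumes "0 < n"
  shows "pmf (rhat n \<omega> a) s = (\<Sum>i<n. indicator {s} (\<omega> a i)) / real n"
proof -
  have "(\<Sum>i<n. indicator {s} (\<omega> a i) :: real) = (\<Sum>i\<in>{..<n} \<inter> \<omega> a -` {s}. 1)"
    by (rule sum.mono_neutral_cong_right) (auto simp: indicator_def)
  moreover have "pmf (rhat n \<omega> a) s = measure (pmf_of_set {..<n}) (\<omega> a -` {s})"
    by (simp add: rhat_def pmf_map)
  moreover have "\<dots> = real (card ({..<n} \<inter> \<omega> a -` {s})) / real n"
    using assms by (subst measure_pmf_of_set) auto
  ultimately show ?thesis
    by simp
qed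

lemma set_pmf_rhat: "0 < n \<Longrightarrow> set_pmf (rhat n \<omega> a) = \<omega> a ` {..<n}"
  unfolding rhat_def by (subst set_map_pmf, subst set_pmf_of_set) auto

context calibrated_predictor
begin

lemma prob_space_samples: "a < m \<Longrightarrow> prob_space (PiM {..<n} (\<lambda>_. pushf \<mu> f a))"
  by (intro prob_space_PiM prob_space_pushf)

lemma prob_space_sample_space: "prob_space (sample_space \<mu> f m n)"
  unfolding sample_space_def by (intro prob_space_PiM prob_space_samples) simp

lemma bad_samples_event:
  assumes a: "a < m" and n: "0 < n" and e: "0 \<le> e"
  defines "T \<equiv> PiM {..<n} (\<lambda>_. pushf \<mu> f a)"
  defines "U \<equiv> {x\<in>space T. (\<exists>i<n. x i \<notin> scores a)
     \<or> (\<exists>s\<in>scores a. e \<le> \<bar>(\<Sum>i<n. indicator {s} (x i)) / real n - score_prob a s\<bar>)}"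
  shows "U \<in> sets T" and "measure T U \<le> real (card (scores a)) * (2 * exp (- 2 * real n * e\<^sup>2))"
proof -
  interpret T: prob_space T
    unfolding T_def using a by (rule prob_space_samples)
  define outside where "outside i = {x\<in>space T. x i \<in> - scores a}" for i
  define deviates where "deviates s = {x\<in>space T.
    e \<le> \<bar>(\<Sum>i<n. indicator {s} (x i)) / real n - score_prob a s\<bar>}" for s
  have U: "U = (\<Union>i<n. outside i) \<union> (\<Union>s\<in>scores a. deviates s)"
    by (auto simp: U_def outside_def deviates_def)
  have outside_null: "outside i \<in> sets T" "measure T (outside i) = 0" if "i < n" for i
    using PiM_component_event[of "{..<n}" "\<lambda>_. pushf \<mu> f a" i "- scores a"] that a
      compl_scores_null[of a]
    by (auto simp: outside_def T_def prob_space_pushf null_sets_def measure_def)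
  have deviates_sets: "deviates s \<in> sets T" for s
    unfolding deviates_def T_def by measurable
  have "measure T (deviates s) \<le> 2 * exp (- 2 * real n * e\<^sup>2)" for s
    unfolding deviates_def T_def using a n e
    by (intro prob_empirical_frequency_deviation prob_space_pushf) auto
  then have "measure T (\<Union>s\<in>scores a. deviates s) \<le> real (card (scores a)) * (2 * exp (- 2 * real n * e\<^sup>2))"
    using deviates_sets finite_scores[OF a]
    by (intro order.trans[OF T.finite_measure_subadditive_finite] sum_bounded_above) auto
  moreover have "measure T (\<Union>i<n. outside i) \<le> 0"
    using outside_null by (intro order.trans[OF T.finite_measure_subadditive_finite]) auto
  moreover have sets: "(\<Union>i<n. outside i) \<in> sets T" "(\<Union>s\<in>scores a. deviates s) \<in> sets T"
    using outside_null deviates_sets finite_scores[OF a] by auto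
  ultimately show "measure T U \<le> real (card (scores a)) * (2 * exp (- 2 * real n * e\<^sup>2))"
    unfolding U using measure_Un_le[OF sets] by linarith
  show "U \<in> sets T"
    unfolding U using sets by auto
qed

lemma card_scores_pos:
  assumes "a < m"
  shows "0 < card (scores a)"
proof -
  have "scores a \<noteq> {}"
    using sum_score_prob[OF assms] by auto
  then show ?thesis
    using finite_scores[OF assms] by (simp add: card_gt_0_iff)
qed

lemma rhat_close_to_score_law:
  assumes n: "0 < n" and in_scores: "\<forall>i<n. \<omega> a i \<in> scores a"
    and close: "\<forall>s\<in>scores a. \<bar>(\<Sum>i<n. indicator {s} (\<omega> a i)) / real n - score_prob a s\<bar> < e"
  shows "set_pmf (rhat n \<omega> a) \<subseteq> scores a \<and> score_dev (rhat n \<omega> a) a \<le> real (card (scores a)) * e"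
proof -
  have "score_dev (rhat n \<omega> a) a \<le> (\<Sum>s\<in>scores a. e)"
    using close by (intro sum_mono) (simp add: pmf_rhat[OF n] less_imp_le)
  then show ?thesis
    using in_scores by (auto simp: set_pmf_rhat[OF n])
qed

lemma good_samples_event:
  assumes n: "0 < n" and e: "\<forall>a<m. 0 \<le> e a"
  shows "\<exists>E\<in>sets (sample_space \<mu> f m n).
    1 - (\<Sum>a<m. real (card (scores a)) * (2 * exp (- 2 * real n * (e a)\<^sup>2))) \<le> measure (sample_space \<mu> f m n) E \<and>
    (\<forall>\<omega>\<in>E. \<forall>a<m. set_pmf (rhat n \<omega> a) \<subseteq> scores a \<and> score_dev (rhat n \<omega> a) a \<le> real (card (scores a)) * e a)"
proof -
  let ?S = "sample_space \<mu> f m n" and ?T = "\<lambda>a. PiM {..<n} (\<lambda>_. pushf \<mu> f a)"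
  let ?freq = "\<lambda>x s. (\<Sum>i<n. indicator {s} (x i)) / real n"
  interpret S: prob_space ?S
    by (rule prob_space_sample_space)
  define U where "U a = {x\<in>space (?T a). (\<exists>i<n. x i \<notin> scores a)
    \<or> (\<exists>s\<in>scores a. e a \<le> \<bar>?freq x s - score_prob a s\<bar>)}" for a
  define V where "V a = {\<omega>\<in>space ?S. \<omega> a \<in> U a}" for a
  define E where "E = space ?S - (\<Union>a<m. V a)"
  have samples: "\<And>a. a \<in> {..<m} \<Longrightarrow> prob_space (?T a)"
    using prob_space_samples by simp
  have V: "V a \<in> sets ?S" "measure ?S (V a) \<le> real (card (scores a)) * (2 * exp (- 2 * real n * (e a)\<^sup>2))"
    if a: "a < m" for a
  proof -
    have "0 \<le> e a"
      using e a by simp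
    note bad = bad_samples_event[OF a n this]
    have U: "U a \<in> sets (?T a)"
      using bad(1) unfolding U_def .
    note component = PiM_component_event[where I="{..<m}" and M="?T", OF samples _ U]
    show "V a \<in> sets ?S"
      using component(1) a unfolding V_def sample_space_def by simp
    show "measure ?S (V a) \<le> real (card (scores a)) * (2 * exp (- 2 * real n * (e a)\<^sup>2))"
      using component(2) bad(2) a unfolding V_def sample_space_def U_def by simp
  qed
  have V_union: "(\<Union>a<m. V a) \<in> sets ?S"
    using V(1) by (intro sets.finite_UN) simp_all
  have "measure ?S (\<Union>a<m. V a) \<le> (\<Sum>a<m. real (card (scores a)) * (2 * exp (- 2 * real n * (e a)\<^sup>2)))"
    using V by (intro order.trans[OF S.finite_measure_subadditive_finite] sum_mono) (auto simp: image_subset_iff)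
  then have measure_E: "1 - (\<Sum>a<m. real (card (scores a)) * (2 * exp (- 2 * real n * (e a)\<^sup>2))) \<le> measure ?S E"
    using S.prob_compl[OF V_union] by (simp add: E_def)
  moreover have good: "set_pmf (rhat n \<omega> a) \<subseteq> scores a \<and> score_dev (rhat n \<omega> a) a \<le> real (card (scores a)) * e a"
    if \<omega>: "\<omega> \<in> E" and a: "a < m" for \<omega> a
  proof -
    have \<omega>_space: "\<omega> \<in> space ?S" and "\<omega> \<notin> V a"
      using \<omega> a unfolding E_def by blast+
    have "\<omega> a \<in> space (?T a)"
      using \<omega>_space a unfolding sample_space_def space_PiM by blast
    then have "\<omega> a \<notin> U a"
      using \<open>\<omega> \<notin> V a\<close> \<omega>_space by (simp add: V_def)
    then show ?thesis
      using \<open>\<omega> a \<in> space (?T a)\<close> n unfolding U_def by (intro rhat_close_to_score_law) (simp_all add: not_le)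
  qed
  moreover have "E \<in> sets ?S"
    using V_union by (simp add: E_def)
  ultimately show ?thesis
    by (intro bexI[of _ E] conjI ballI allI impI) simp_all
qed

end

lemma hoeffding_tolerance:
  fixes c M \<delta> n :: real
  assumes \<delta>: "0 < \<delta>" "\<delta> < 1" and c: "1 \<le> c" and M: "1 \<le> M" and n: "0 < n"
  defines "e \<equiv> sqrt (ln (2 * M * c / \<delta>) / (2 * n))"
  shows "c * (2 * exp (- 2 * n * e\<^sup>2)) = \<delta> / M"
    and "c * e = sqrt (c\<^sup>2 / (2 * n) * ln (2 * M * c / \<delta>))"
    and "3 / 2 * (c * e) \<le> sqrt (2 * c\<^sup>2 / n * ln (2 * M * c / \<delta>))"
    and "0 \<le> e"
proof -
  have "1 * 1 \<le> M * c"
    using c M by (intro mult_mono) auto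
  then have ratio: "1 < 2 * M * c / \<delta>"
    using \<delta> by (simp add: field_simps)
  then have L: "0 \<le> ln (2 * M * c / \<delta>)"
    by simp
  then show e: "0 \<le> e"
    using n by (simp add: e_def)
  then have "e\<^sup>2 = ln (2 * M * c / \<delta>) / (2 * n)"
    using n by (simp add: e_def)
  then have "exp (- 2 * n * e\<^sup>2) = \<delta> / (2 * M * c)"
    using n ratio by (simp add: exp_minus)
  then show "c * (2 * exp (- 2 * n * e\<^sup>2)) = \<delta> / M"
    using c by (simp add: field_simps)
  have "c\<^sup>2 / (2 * n) * ln (2 * M * c / \<delta>) = c\<^sup>2 * (ln (2 * M * c / \<delta>) / (2 * n))"
    by simp
  then show ce: "c * e = sqrt (c\<^sup>2 / (2 * n) * ln (2 * M * c / \<delta>))"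
    using c unfolding e_def by (simp only: real_sqrt_mult real_sqrt_abs)
  have "sqrt (2 * c\<^sup>2 / n * ln (2 * M * c / \<delta>)) = sqrt (2\<^sup>2 * (c\<^sup>2 / (2 * n) * ln (2 * M * c / \<delta>)))"
    by (simp add: power2_eq_square)
  then have "2 * (c * e) = sqrt (2 * c\<^sup>2 / n * ln (2 * M * c / \<delta>))"
    by (simp only: ce real_sqrt_mult real_sqrt_abs)
  moreover have "0 \<le> c * e"
    using c e by simp
  ultimately show "3 / 2 * (c * e) \<le> sqrt (2 * c\<^sup>2 / n * ln (2 * M * c / \<delta>))"
    by linarith
qed

theorem theorem4p1:
  fixes \<mu> :: "('x::polish_space \<times> 'k::finite \<times> nat) measure"
    and m n :: nat and f :: "'x \<Rightarrow> nat \<Rightarrow> real^'k" and y0 :: 'k and \<delta> :: real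
  assumes "CARD('k) \<ge> 2"
    and "classif_problem \<mu> m"
    and "\<forall>a<m. (\<lambda>x. f x a) \<in> borel_measurable borel"
    and "\<forall>x. \<forall>a<m. f x a \<in> prob_simplex"
    and "calibrated \<mu> f m"
    and "\<forall>a<m. finite (msupport (pushf \<mu> f a))"
    and "n > 0"
    and "0 < \<delta>" and "\<delta> < 1"
  shows "\<exists>E\<in>sets (sample_space \<mu> f m n).
           measure (sample_space \<mu> f m n) E \<ge> 1 - \<delta> \<and>
           (\<forall>\<omega>\<in>E. \<forall>q \<gamma>. is_opt (rhat n \<omega>) m q \<gamma> \<longrightarrow>
              (\<Sum>a<m. randErr \<mu> (hhat f (rhat n \<omega>) \<gamma> y0) a) - errstar \<mu> f m
                \<le> (\<Sum>a<m. sqrt (2 * real (card (msupport (pushf \<mu> f a)))^2 / real n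
                        * ln (2 * real m * real (card (msupport (pushf \<mu> f a))) / \<delta>)))
              \<and> DPGap \<mu> (hhat f (rhat n \<omega>) \<gamma> y0) m
                \<le> Max ((\<lambda>a. sqrt (real (card (msupport (pushf \<mu> f a)))^2 / (2 * real n)
                        * ln (2 * real m * real (card (msupport (pushf \<mu> f a))) / \<delta>))) ` {..<m}))"
proof -
  interpret calibrated_predictor \<mu> m f
    using assms by unfold_locales auto
  have n: "0 < n" and \<delta>: "0 < \<delta>" "\<delta> < 1"
    using assms by auto
  define e where "e a = sqrt (ln (2 * real m * real (card (scores a)) / \<delta>) / (2 * real n))" for a
  have card: "1 \<le> real (card (scores a))" if "a < m" for a
    using card_scores_pos[OF that] by simp
  have m: "1 \<le> real m"
    using m_pos by simp
  have n_real: "0 < real n"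
    using n by simp
  note tolerance = hoeffding_tolerance[OF \<delta> card m n_real, folded e_def]
  have e_nonneg: "\<forall>a<m. 0 \<le> e a"
    using tolerance(4) by simp
  have budget: "(\<Sum>a<m. real (card (scores a)) * (2 * exp (- 2 * real n * (e a)\<^sup>2))) = \<delta>"
    using tolerance(1) m by simp
  obtain E where E: "E \<in> sets (sample_space \<mu> f m n)"
    "1 - \<delta> \<le> measure (sample_space \<mu> f m n) E"
    "\<forall>\<omega>\<in>E. \<forall>a<m. set_pmf (rhat n \<omega> a) \<subseteq> scores a \<and> score_dev (rhat n \<omega> a) a \<le> real (card (scores a)) * e a"
    using good_samples_event[OF n e_nonneg] unfolding budget by blast
  show ?thesis
  proof (intro bexI[OF _ E(1)] conjI ballI allI impI)
    fix \<omega> q \<gamma> assume \<omega>: "\<omega> \<in> E" and opt: "is_opt (rhat n \<omega>) m q \<gamma>"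
    note excess = excess_error_le[of "rhat n \<omega>", OF _ _ opt] and gap = DPGap_le[of "rhat n \<omega>"]
    show "(\<Sum>a<m. randErr \<mu> (hhat f (rhat n \<omega>) \<gamma> y0) a) - errstar \<mu> f m
        \<le> (\<Sum>a<m. sqrt (2 * real (card (scores a))^2 / real n * ln (2 * real m * real (card (scores a)) / \<delta>)))"
      using E(3) \<omega> by (intro order.trans[OF excess, of "\<lambda>a. real (card (scores a)) * e a"] sum_mono tolerance(3)) auto
    show "DPGap \<mu> (hhat f (rhat n \<omega>) \<gamma> y0) m
        \<le> Max ((\<lambda>a. sqrt (real (card (scores a))^2 / (2 * real n) * ln (2 * real m * real (card (scores a)) / \<delta>))) ` {..<m})"
      using E(3) \<omega> tolerance(2) n opt
      by (intro order.trans[OF gap, of "\<lambda>a. real (card (scores a)) * e a"] eq_refl arg_cong[where f=Max] image_cong)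
        (auto simp: is_opt_def)
  qed (use E(2) in simp)
qed

end
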